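(* There exists a constant $C_{\rm lip}>0$, depending only on the shape-regularity of the family $\{\mathcal{T}_h\}_{h>0}$ and on $p$ (in particular independent of $h$ and of $\gamma_0$), such that for all $v_h,w_h,z_h\in\mathcal{V}_h$, $$|d_h(v_h;v_h,z_h)-d_h(w_h;w_h,z_h)|\le C_{\rm lip}\,\gamma_0\,h\,|v_h-w_h|_{1,\Omega}\,|z_h|_{1,\Omega}.$$
   Context: Let $\Omega\subset\mathbb{R}^2$ be an open bounded polygonal domain with Lipschitz boundary and $\{\mathcal{T}_h\}_{h>0}$ a shape-regular family of conforming triangulations of $\Omega$ into triangles $K$, $h_K=\mathrm{diam}(K)$, $h=\max_K h_K$, nodes $x_1,\dots,x_N$. $\mathcal{V}_h=\{\chi\in H^1(\Omega):\chi|_K\in\mathbb{P}_1(K)\ \forall K\}$. $\mathcal{E}_h$ is the set of interior edges; for $E\in\mathcal{E}_h$, $h_E=|E|$, $\mathbf t$ a fixed unit tangent vector on $E$ and $\partial_{\mathbf t}$ the tangential derivative. For a node $x_i$, $S_i=\{j\neq i: x_j\text{ shares an interior edge with }x_i\}$. For $w_h\in\mathcal{V}_h$, $\xi_{w_h}\in\mathcal{V}_h$ has nodal values $\xi_{w_h}(x_i)=\big|\sum_{j\in S_i}(w_h(x_i)-w_h(x_j))\big|\big/\sum_{j\in S_i}|w_h(x_i)-w_h(x_j)|$ if the denominator is nonzero and $0$ otherwise. Fix $p\in[1,\infty)$ and $\gamma_0>0$; $\alpha_E(w_h):=\max_{x\in E}[\xi_{w_h}(x)]^p$, and $$d_h(w_h;u_h,v_h)=\sum_{E\in\mathcal{E}_h}\gamma_0\,h_E^2\,\alpha_E(w_h)\int_E\partial_{\mathbf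 t}u_h\,\partial_{\mathbf t}v_h\,ds.$$ $|\cdot|_{1,\Omega}$ is the $H^1(\Omega)$ seminorm. *)

theory Defs
  imports "HOL-Analysis.Analysis"
begin

type_synonym pt = "real \<times> real"

definition rot90 :: "pt \<Rightarrow> pt" where
  "rot90 e = (- snd e, fst e)"

definition lipschitz_boundary :: "pt set \<Rightarrow> bool" where
  "lipschitz_boundary \<Omega> \<longleftrightarrow>
     (\<forall>x\<in>frontier \<Omega>. \<exists>r>0. \<exists>e::pt. norm e = 1 \<and>
        (\<exists>L (g::real \<Rightarrow> real). lipschitz_on L UNIV g \<and>
           (\<forall>y\<in>ball x r. y \<in> \<Omega> \<longleftrightarrow> y \<bullet> e > g (y \<bullet> rot90 e))))"

text \<open>A mesh element is given by its vertex set V (3 affinely independent points);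
  the triangle is K = convex hull V.\<close>
definition conforming_triangulation :: "pt set \<Rightarrow> pt set set \<Rightarrow> bool" where
  "conforming_triangulation \<Omega> T \<longleftrightarrow>
     finite T \<and> T \<noteq> {} \<and>
     (\<forall>V\<in>T. card V = 3 \<and> \<not> affine_dependent V) \<and>
     (\<Union>V\<in>T. convex hull V) = closure \<Omega> \<and>
     (\<forall>V\<in>T. \<forall>V'\<in>T. V \<noteq> V' \<longrightarrow> convex hull V \<inter> convex hull V' = convex hull (V \<inter> V'))"

definition inball_diam :: "pt set \<Rightarrow> real" where
  "inball_diam K = 2 * Sup {r. \<exists>c. cball c r \<subseteq> K}"

definition shape_regular :: "real \<Rightarrow> pt set set \<Rightarrow> bool" where
  "shape_regular \<sigma> T \<longleftrightarrow>
     (\<forall>V\<in>T. diameter (convex hull V) \<le> \<sigma> * inball_diam (convex hull V))"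

definition mesh_size :: "pt set set \<Rightarrow> real" where
  "mesh_size T = Max ((\<lambda>V. diameter (convex hull V)) ` T)"

definition mesh_nodes :: "pt set set \<Rightarrow> pt set" where
  "mesh_nodes T = \<Union>T"

definition P1_space :: "pt set set \<Rightarrow> (pt \<Rightarrow> real) set" where
  "P1_space T = {u. \<forall>V\<in>T. \<exists>c (g::pt). \<forall>x\<in>convex hull V. u x = c + g \<bullet> x}"

definition interior_edges :: "pt set \<Rightarrow> pt set set \<Rightarrow> pt set set" where
  "interior_edges \<Omega> T =
     {{a, b} | a b. a \<noteq> b \<and> (\<exists>V\<in>T. a \<in> V \<and> b \<in> V) \<and> open_segment a b \<subseteq> \<Omega>}"

definition edge_ends :: "pt set \<Rightarrow> pt \<times> pt" where
  "edge_ends E = (SOME ab. E = {fst ab, snd ab} \<and> fst ab \<noteq> snd ab)"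

definition edge_length :: "pt set \<Rightarrow> real" where
  "edge_length E = dist (fst (edge_ends E)) (snd (edge_ends E))"

definition edge_tangent :: "pt set \<Rightarrow> pt" where
  "edge_tangent E = (let (a, b) = edge_ends E in (1 / norm (b - a)) *\<^sub>R (b - a))"

definition tderiv :: "(pt \<Rightarrow> real) \<Rightarrow> pt \<Rightarrow> pt \<Rightarrow> real" where
  "tderiv u t x = vector_derivative (\<lambda>s. u (x + s *\<^sub>R t)) (at 0)"

definition edge_integral :: "pt set \<Rightarrow> (pt \<Rightarrow> real) \<Rightarrow> real" where
  "edge_integral E f = (let (a, b) = edge_ends E in
     dist a b * integral {0..1} (\<lambda>s. f (a + s *\<^sub>R (b - a))))"

definition neighbours :: "pt set \<Rightarrow> pt set set \<Rightarrow> pt \<Rightarrow> pt set" where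
  "neighbours \<Omega> T x = {y \<in> mesh_nodes T. y \<noteq> x \<and> {x, y} \<in> interior_edges \<Omega> T}"

definition xi_node :: "pt set \<Rightarrow> pt set set \<Rightarrow> (pt \<Rightarrow> real) \<Rightarrow> pt \<Rightarrow> real" where
  "xi_node \<Omega> T w x =
     (let S = neighbours \<Omega> T x;
          den = (\<Sum>y\<in>S. \<bar>w x - w y\<bar>)
      in if den \<noteq> 0 then \<bar>\<Sum>y\<in>S. (w x - w y)\<bar> / den else 0)"

text \<open>alpha_E(w) = max over x in E of xi_w(x)^p; on E the P1 function xi_w is the
  linear interpolant of its two endpoint nodal values.\<close>
definition alpha_edge :: "pt set \<Rightarrow> pt set set \<Rightarrow> real \<Rightarrow> (pt \<Rightarrow> real) \<Rightarrow> pt set \<Rightarrow> real" where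
  "alpha_edge \<Omega> T p w E = (let (a, b) = edge_ends E in
     Sup ((\<lambda>s. ((1 - s) * xi_node \<Omega> T w a + s * xi_node \<Omega> T w b) powr p) ` {0..1}))"

definition d_h :: "pt set \<Rightarrow> pt set set \<Rightarrow> real \<Rightarrow> real \<Rightarrow>
    (pt \<Rightarrow> real) \<Rightarrow> (pt \<Rightarrow> real) \<Rightarrow> (pt \<Rightarrow> real) \<Rightarrow> real" where
  "d_h \<Omega> T p \<gamma>\<^sub>0 w u v =
     (\<Sum>E\<in>interior_edges \<Omega> T.
        \<gamma>\<^sub>0 * (edge_length E)\<^sup>2 * alpha_edge \<Omega> T p w E *
        edge_integral E (\<lambda>x. tderiv u (edge_tangent E) x * tderiv v (edge_tangent E) x))"

text \<open>H^1 seminorm (gradient of a P1 function taken pointwise a.e.).\<close>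
definition H1_seminorm :: "pt set \<Rightarrow> (pt \<Rightarrow> real) \<Rightarrow> real" where
  "H1_seminorm \<Omega> u = sqrt (integral \<Omega> (\<lambda>x. (onorm (frechet_derivative u (at x)))\<^sup>2))"

end

theory Submission
  imports Defs
begin

text \<open>For piecewise linear functions the tangential derivative along an interior edge \<open>E\<close> is
  the increment \<open>\<delta>\<^sub>E u\<close> divided by \<open>|E|\<close>, so \<open>d\<^sub>h(w; u, z) = \<gamma>\<^sub>0 \<Sum>\<^sub>E |E| \<alpha>\<^sub>E(w) \<delta>\<^sub>E u \<delta>\<^sub>E z\<close>.
  With \<open>u = v - w\<close> we split
  \<open>\<alpha>\<^sub>E(v) \<delta>\<^sub>E v - \<alpha>\<^sub>E(w) \<delta>\<^sub>E w = \<alpha>\<^sub>E(v) \<delta>\<^sub>E u + (\<alpha>\<^sub>E(v) - \<alpha>\<^sub>E(w)) \<delta>\<^sub>E w\<close>.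
  The first term is harmless because \<open>0 \<le> \<alpha>\<^sub>E \<le> 1\<close>. For the second, \<open>\<alpha>\<^sub>E\<close> is \<open>p\<close>-Lipschitz in the
  values of \<open>\<xi>\<close> at the endpoints, and the ratio defining \<open>\<xi>\<close> satisfies
  \<open>|\<xi>\<^sub>v(x) - \<xi>\<^sub>w(x)| \<Sum>\<^sub>j |w(x) - w(x\<^sub>j)| \<le> 2 \<Sum>\<^sub>j |u(x) - u(x\<^sub>j)|\<close>; as \<open>|\<delta>\<^sub>E w|\<close> is one of the summands,
  the second term is controlled by the variation of \<open>u\<close> around the endpoints of \<open>E\<close>.
  Cauchy-Schwarz, a bound on the number of elements meeting at a node (a packing argument with
  their inscribed balls) and the estimate \<open>(\<delta>\<^sub>E f)\<^sup>2 \<le> C \<sigma>\<^sup>2 |\<nabla>f|\<^sup>2 |K|\<close> on an element \<open>K \<supseteq> E\<close> bound all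
  edge sums by \<open>|u|\<^sub>1 |z|\<^sub>1\<close>, and \<open>|E| \<le> h\<close> supplies the factor \<open>h\<close>.
  The Lipschitz boundary only serves to place the interiors of the elements inside \<open>\<Omega>\<close>.\<close>

lemma sum_comp_le_fibre_bound:
  fixes F :: "'b \<Rightarrow> real"
  assumes "finite X" "finite Y" "f ` X \<subseteq> Y"
    and "\<And>y. y \<in> Y \<Longrightarrow> real (card {x\<in>X. f x = y}) \<le> k"
    and "\<And>y. y \<in> Y \<Longrightarrow> 0 \<le> F y"
  shows "(\<Sum>x\<in>X. F (f x)) \<le> k * (\<Sum>y\<in>Y. F y)"
proof -
  have "(\<Sum>x\<in>X. F (f x)) = (\<Sum>y\<in>Y. real (card {x\<in>X. f x = y}) * F y)"
    using sum.group[of X Y f "\<lambda>x. F (f x)"] assms(1-3) by simp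
  also have "\<dots> \<le> (\<Sum>y\<in>Y. k * F y)"
    by (intro sum_mono mult_right_mono) (simp_all add: assms)
  finally show ?thesis
    by (simp add: sum_distrib_left)
qed

lemma L2_set_comp_le_fibre_bound:
  assumes "finite X" "finite Y" "g ` X \<subseteq> Y"
    and "\<And>y. y \<in> Y \<Longrightarrow> real (card {x\<in>X. g x = y}) \<le> k"
  shows "L2_set (\<lambda>x. f (g x)) X \<le> sqrt k * L2_set f Y"
proof -
  have "(\<Sum>x\<in>X. (f (g x))\<^sup>2) \<le> k * (\<Sum>y\<in>Y. (f y)\<^sup>2)"
    using assms by (intro sum_comp_le_fibre_bound) auto
  then show ?thesis
    unfolding L2_set_def by (metis real_sqrt_le_mono real_sqrt_mult)
qed

definition abs_sum_ratio :: "('a \<Rightarrow> real) \<Rightarrow> 'a set \<Rightarrow> real" where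
  "abs_sum_ratio x S =
     (if (\<Sum>j\<in>S. \<bar>x j\<bar>) \<noteq> 0 then \<bar>\<Sum>j\<in>S. x j\<bar> / (\<Sum>j\<in>S. \<bar>x j\<bar>) else 0)"

lemma abs_sum_ratio_bounds: "0 \<le> abs_sum_ratio x S" "abs_sum_ratio x S \<le> 1"
proof -
  have "\<bar>\<Sum>j\<in>S. x j\<bar> \<le> (\<Sum>j\<in>S. \<bar>x j\<bar>)"
    by (rule sum_abs)
  then show "0 \<le> abs_sum_ratio x S" "abs_sum_ratio x S \<le> 1"
    unfolding abs_sum_ratio_def by (auto simp: divide_le_eq_1)
qed

lemma ratio_diff_mult_le:
  fixes sx sy X Y D :: real
  assumes "0 \<le> sx" "sx \<le> X" "0 \<le> sy" "sy \<le> Y" "\<bar>X - Y\<bar> \<le> D" "\<bar>sx - sy\<bar> \<le> D"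
  shows "\<bar>(if X \<noteq> 0 then sx / X else 0) - (if Y \<noteq> 0 then sy / Y else 0)\<bar> * Y \<le> 2 * D"
proof -
  consider "Y = 0" | "Y \<noteq> 0" "X = 0" | "Y \<noteq> 0" "X \<noteq> 0"
    by blast
  then show ?thesis
  proof cases
    case 1
    then show ?thesis
      using assms(5) by simp
  next
    case 2
    then have "\<bar>(if X \<noteq> 0 then sx / X else 0) - (if Y \<noteq> 0 then sy / Y else 0)\<bar> * Y = sy"
      using assms(3,4) by simp
    then show ?thesis
      using 2 assms(4,5) by linarith
  next
    case 3
    then have "0 < X" "0 < Y"
      using assms(1-4) by auto
    have "sx / X - sy / Y = ((sx / X) * (Y - X) + (sx - sy)) / Y"
      using \<open>0 < X\<close> \<open>0 < Y\<close> by (simp add: field_simps)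
    then have "\<bar>sx / X - sy / Y\<bar> * Y = \<bar>(sx / X) * (Y - X) + (sx - sy)\<bar>"
      using \<open>0 < Y\<close> by simp
    also have "\<dots> \<le> (sx / X) * \<bar>Y - X\<bar> + \<bar>sx - sy\<bar>"
      using \<open>0 < X\<close> assms(1) by (auto simp: abs_mult intro: order_trans[OF abs_triangle_ineq])
    also have "\<dots> \<le> 1 * D + D"
      using \<open>0 < X\<close> assms by (intro add_mono mult_mono) (auto simp: abs_minus_commute)
    finally show ?thesis
      using 3 by simp
  qed
qed

lemma abs_sum_ratio_diff_le:
  "\<bar>abs_sum_ratio x S - abs_sum_ratio y S\<bar> * (\<Sum>j\<in>S. \<bar>y j\<bar>) \<le> 2 * (\<Sum>j\<in>S. \<bar>x j - y j\<bar>)"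
  unfolding abs_sum_ratio_def
proof (rule ratio_diff_mult_le)
  show "\<bar>(\<Sum>j\<in>S. \<bar>x j\<bar>) - (\<Sum>j\<in>S. \<bar>y j\<bar>)\<bar> \<le> (\<Sum>j\<in>S. \<bar>x j - y j\<bar>)"
    unfolding sum_subtractf[symmetric] by (rule order_trans[OF sum_abs sum_mono]) linarith
  show "\<bar>\<bar>\<Sum>j\<in>S. x j\<bar> - \<bar>\<Sum>j\<in>S. y j\<bar>\<bar> \<le> (\<Sum>j\<in>S. \<bar>x j - y j\<bar>)"
    by (rule order_trans[OF abs_triangle_ineq3]) (simp add: sum_subtractf[symmetric] sum_abs)
qed (simp_all add: sum_abs)

lemma powr_diff_le_unit_interval:
  fixes x y p :: real
  assumes "0 \<le> x" "x \<le> 1" "0 \<le> y" "y \<le> 1" "1 \<le> p"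
  shows "\<bar>x powr p - y powr p\<bar> \<le> p * \<bar>x - y\<bar>"
proof -
  have one_sided: "b powr p - a powr p \<le> p * (b - a)" if "0 \<le> a" "a < b" "b \<le> 1" for a b
  proof (cases "a = 0")
    case True
    have "b powr p \<le> b"
      using powr_le_one_le[of b p] that assms(5) by simp
    also have "b \<le> p * b"
      using that assms(5) by simp
    finally show ?thesis
      using True by simp
  next
    case False
    with that have "0 < a"
      by simp
    then obtain c where c: "a < c" "c < b" "b powr p - a powr p = (b - a) * (p * c powr (p - 1))"
      using MVT2[OF \<open>a < b\<close>, of "\<lambda>t. t powr p" "\<lambda>t. p * t powr (p - 1)"]
        has_real_derivative_powr by force
    have "c powr (p - 1) \<le> 1"
      using c that assms(5) by (intro powr_le1) auto
    then have "(b - a) * (p * c powr (p - 1)) \<le> (b - a) * p"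
      using c assms(5) by (intro mult_left_mono) auto
    then show ?thesis
      using c by (simp add: mult.commute)
  qed
  consider "y < x" | "x < y" | "x = y"
    by linarith
  then show ?thesis
  proof cases
    case 1
    have "y powr p \<le> x powr p"
      using 1 assms by (intro powr_mono2) auto
    then show ?thesis
      using one_sided[of y x] 1 assms by simp
  next
    case 2
    have "x powr p \<le> y powr p"
      using 2 assms by (intro powr_mono2) auto
    then show ?thesis
      using one_sided[of x y] 2 assms by simp
  qed simp
qed

lemma Sup_powr_convex_combination:
  fixes a b p :: real
  assumes "0 \<le> a" "0 \<le> b" "0 \<le> p"
  shows "Sup ((\<lambda>s. ((1 - s) * a + s * b) powr p) ` {0..1}) = max a b powr p"
proof (rule cSup_eq_maximum)
  show "max a b powr p \<in> (\<lambda>s. ((1 - s) * a + s * b) powr p) ` {0..1}"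
  proof (cases "a \<le> b")
    case True
    then have "max a b powr p = ((1 - 1) * a + 1 * b) powr p"
      by simp
    then show ?thesis
      by (rule image_eqI) simp
  next
    case False
    then have "max a b powr p = ((1 - 0) * a + 0 * b) powr p"
      by simp
    then show ?thesis
      by (rule image_eqI) simp
  qed
next
  fix y
  assume "y \<in> (\<lambda>s. ((1 - s) * a + s * b) powr p) ` {0..1}"
  then obtain s where s: "0 \<le> s" "s \<le> 1" "y = ((1 - s) * a + s * b) powr p"
    by auto
  have "(1 - s) * a + s * b \<le> (1 - s) * max a b + s * max a b"
    using s by (intro add_mono mult_left_mono) auto
  then have le: "(1 - s) * a + s * b \<le> max a b"
    by (simp add: algebra_simps)
  have nonneg: "0 \<le> (1 - s) * a + s * b"
    using s assms by simp
  show "y \<le> max a b powr p"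
    unfolding s(3) by (rule powr_mono2[OF assms(3) nonneg le])
qed

section \<open>Plane geometry\<close>

lemma open_subgraph:
  assumes "continuous_on UNIV g"
  shows "open {z. z \<bullet> e < g (z \<bullet> d)}"
  by (intro open_Collect_less continuous_intros continuous_on_compose2[OF assms]) auto

lemma interior_closure_subset_if_lipschitz_boundary:
  assumes "open \<Omega>" "lipschitz_boundary \<Omega>"
  shows "interior (closure \<Omega>) \<subseteq> \<Omega>"
proof
  fix x
  assume x: "x \<in> interior (closure \<Omega>)"
  show "x \<in> \<Omega>"
  proof (rule ccontr)
    assume "x \<notin> \<Omega>"
    then have "x \<in> frontier \<Omega>"
      using x interior_subset assms(1) by (auto simp: frontier_def interior_open)
    then obtain r e L g where r: "r > 0" and e: "norm e = 1" and g: "lipschitz_on L UNIV g"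
      and graph: "\<forall>y\<in>ball x r. y \<in> \<Omega> \<longleftrightarrow> y \<bullet> e > g (y \<bullet> rot90 e)"
      using assms(2) unfolding lipschitz_boundary_def by blast
    obtain \<epsilon> where "\<epsilon> > 0" "ball x \<epsilon> \<subseteq> closure \<Omega>"
      using x by (meson mem_interior)
    \<comment> \<open>the point \<open>y\<close> just below \<open>x\<close> lies in the open region under the graph, which misses \<open>\<Omega>\<close>\<close>
    define \<delta> where "\<delta> = min r \<epsilon> / 2"
    define y where "y = x - \<delta> *\<^sub>R e"
    have "\<delta> > 0" "\<delta> < r" "\<delta> < \<epsilon>"
      using r \<open>\<epsilon> > 0\<close> unfolding \<delta>_def by auto
    have "dist x y = \<delta>"
      unfolding y_def using e \<open>\<delta> > 0\<close> by (simp add: dist_norm)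
    have "e \<bullet> rot90 e = 0"
      by (cases e) (simp add: rot90_def algebra_simps)
    then have "y \<bullet> rot90 e = x \<bullet> rot90 e" "y \<bullet> e = x \<bullet> e - \<delta>"
      unfolding y_def using e by (simp_all add: inner_diff_left dot_square_norm)
    moreover have "\<not> x \<bullet> e > g (x \<bullet> rot90 e)"
      using graph \<open>x \<notin> \<Omega>\<close> r by simp
    ultimately have below: "y \<bullet> e < g (y \<bullet> rot90 e)"
      using \<open>\<delta> > 0\<close> by simp
    define U where "U = ball x r \<inter> {z. z \<bullet> e < g (z \<bullet> rot90 e)}"
    have "open U"
      unfolding U_def using lipschitz_on_continuous_on[OF g] by (intro open_Int open_ball open_subgraph)
    moreover have "y \<in> U"
      unfolding U_def using \<open>dist x y = \<delta>\<close> \<open>\<delta> < r\<close> below by simp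
    moreover have "U \<inter> \<Omega> = {}"
      unfolding U_def using graph by auto
    moreover have "y \<in> closure \<Omega>"
      using \<open>dist x y = \<delta>\<close> \<open>\<delta> < \<epsilon>\<close> \<open>ball x \<epsilon> \<subseteq> closure \<Omega>\<close> by auto
    ultimately show False
      using closure_iff_nhds_not_empty by blast
  qed
qed

lemma homothetic_ball_subset:
  fixes c x :: "'a::euclidean_space"
  assumes K: "convex K" "bounded K" "c \<in> K" "cball x r \<subseteq> K" and t: "0 < t" "t \<le> 1"
  shows "ball (c + t *\<^sub>R (x - c)) (t * r) \<subseteq> K \<inter> cball c (t * diameter K)"
proof
  fix z
  assume z: "z \<in> ball (c + t *\<^sub>R (x - c)) (t * r)"
  define x' where "x' = c + (1 / t) *\<^sub>R (z - c)"
  have "x' - x = (1 / t) *\<^sub>R (z - (c + t *\<^sub>R (x - c)))"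
    unfolding x'_def using t by (simp add: algebra_simps)
  then have "norm (x' - x) = dist z (c + t *\<^sub>R (x - c)) / t"
    using t by (simp add: dist_norm)
  also have "\<dots> < t * r / t"
    using z t by (intro divide_strict_right_mono) (auto simp: dist_commute)
  finally have "dist x x' < r"
    using t by (simp add: dist_norm norm_minus_commute)
  then have "x' \<in> K"
    using K by auto
  have z_eq: "z = (1 - t) *\<^sub>R c + t *\<^sub>R x'"
    unfolding x'_def using t by (simp add: algebra_simps)
  have "z \<in> K"
    unfolding z_eq using convexD[OF K(1,3) \<open>x' \<in> K\<close>] t by simp
  moreover have "dist c z = t * dist c x'"
    unfolding z_eq using t by (simp add: dist_norm algebra_simps flip: scaleR_diff_right)
  moreover have "dist c x' \<le> diameter K"
    using diameter_bounded_bound[OF K(2,3) \<open>x' \<in> K\<close>] .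
  ultimately show "z \<in> K \<inter> cball c (t * diameter K)"
    using t by (simp add: mult_left_mono)
qed

lemma shifted_point_in_closed_segment:
  fixes a b :: "'a::real_normed_vector"
  assumes "a \<noteq> b" "0 < s" "s < 1" "\<bar>\<tau>\<bar> < min s (1 - s) * norm (b - a)"
  shows "a + s *\<^sub>R (b - a) + \<tau> *\<^sub>R ((1 / norm (b - a)) *\<^sub>R (b - a)) \<in> closed_segment a b"
proof -
  define u where "u = s + \<tau> / norm (b - a)"
  have "\<bar>\<tau> / norm (b - a)\<bar> = \<bar>\<tau>\<bar> / norm (b - a)"
    by simp
  also have "\<dots> < min s (1 - s) * norm (b - a) / norm (b - a)"
    using assms(1,4) by (intro divide_strict_right_mono) simp_all
  finally have "\<bar>\<tau> / norm (b - a)\<bar> < s" "\<bar>\<tau> / norm (b - a)\<bar> < 1 - s"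
    using assms(1) by simp_all
  moreover have "- (\<tau> / norm (b - a)) \<le> \<bar>\<tau> / norm (b - a)\<bar>" "\<tau> / norm (b - a) \<le> \<bar>\<tau> / norm (b - a)\<bar>"
    by (rule abs_ge_minus_self, rule abs_ge_self)
  ultimately have "0 \<le> u" "u \<le> 1"
    unfolding u_def by linarith+
  moreover have "a + s *\<^sub>R (b - a) + \<tau> *\<^sub>R ((1 / norm (b - a)) *\<^sub>R (b - a)) = (1 - u) *\<^sub>R a + u *\<^sub>R b"
    unfolding u_def by (simp add: algebra_simps divide_inverse)
  ultimately show ?thesis
    unfolding closed_segment_def by blast
qed

lemma diameter_ge_radius_if_cball_subset:
  fixes x :: "'a::euclidean_space"
  assumes "bounded K" "cball x r \<subseteq> K" "0 \<le> r"
  shows "r \<le> diameter K"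
proof -
  obtain b :: 'a where b: "b \<in> Basis"
    using nonempty_Basis by blast
  have "x \<in> K" "x + r *\<^sub>R b \<in> K"
    using assms b by (auto simp: dist_norm)
  then have "dist x (x + r *\<^sub>R b) \<le> diameter K"
    by (intro diameter_bounded_bound[OF assms(1)])
  then show ?thesis
    using b assms(3) by (simp add: dist_norm)
qed

lemma bdd_above_inradii:
  fixes K :: "'a::euclidean_space set"
  assumes "bounded K"
  shows "bdd_above {r. \<exists>c. cball c r \<subseteq> K}"
proof (rule bdd_aboveI)
  fix r
  assume "r \<in> {r. \<exists>c. cball c r \<subseteq> K}"
  then obtain c where "cball c r \<subseteq> K"
    by blast
  then show "r \<le> diameter K"
    using diameter_ge_radius_if_cball_subset[OF assms] diameter_ge_0[OF assms]
    by (cases "0 \<le> r") auto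
qed

lemma card_disjoint_balls_in_cball_le:
  fixes y :: "'i \<Rightarrow> 'a::euclidean_space"
  assumes "finite I" "0 < s" "0 \<le> \<rho>"
    and disjoint: "disjoint_family_on (\<lambda>i. ball (y i) s) I"
    and sub: "\<And>i. i \<in> I \<Longrightarrow> ball (y i) s \<subseteq> cball c \<rho>"
  shows "real (card I) * s ^ DIM('a) \<le> \<rho> ^ DIM('a)"
proof -
  define \<kappa> where "\<kappa> = measure lborel (ball (0::'a) 1)"
  have "0 < \<kappa>"
    unfolding \<kappa>_def by (rule content_ball_pos) simp
  have ball_measure: "measure lborel (ball z s) = s ^ DIM('a) * \<kappa>" for z :: 'a
    unfolding \<kappa>_def using content_ball_conv_unit_ball[of s z] \<open>0 < s\<close> by simp
  have "real (card I) * s ^ DIM('a) * \<kappa> = (\<Sum>i\<in>I. measure lborel (ball (y i) s))"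
    by (simp add: ball_measure)
  also have "\<dots> = measure lborel (\<Union>i\<in>I. ball (y i) s)"
  proof (rule measure_finite_Union[symmetric, OF \<open>finite I\<close> _ disjoint])
    show "emeasure lborel (ball (y i) s) \<noteq> \<infinity>" for i
      using emeasure_lborel_ball_finite by (metis order.strict_implies_not_eq)
  qed auto
  also have "\<dots> \<le> measure lborel (cball c \<rho>)"
  proof (rule measure_mono_fmeasurable)
    show "cball c \<rho> \<in> fmeasurable lborel"
      unfolding fmeasurable_def using emeasure_bounded_finite[OF bounded_cball[of c \<rho>]] by simp
  qed (use sub \<open>finite I\<close> in auto)
  also have "\<dots> = \<rho> ^ DIM('a) * \<kappa>"
    unfolding \<kappa>_def using content_ball_conv_unit_ball[of \<rho> c] \<open>0 \<le> \<rho>\<close>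
    by (simp add: content_cball_conv_ball)
  finally show ?thesis
    using \<open>0 < \<kappa>\<close> by simp
qed

lemma card_le_if_disjoint_interiors_and_inscribed_balls:
  fixes K :: "'i \<Rightarrow> 'a::euclidean_space set"
  assumes "finite I" "0 < q"
    and K: "\<And>i. i \<in> I \<Longrightarrow> convex (K i) \<and> bounded (K i) \<and> c \<in> K i"
    and inscribed: "\<And>i. i \<in> I \<Longrightarrow> \<exists>x r. 0 < r \<and> cball x r \<subseteq> K i \<and> diameter (K i) \<le> q * r"
    and disjoint: "disjoint_family_on (\<lambda>i. interior (K i)) I"
  shows "real (card I) \<le> q ^ DIM('a)"
proof (cases "I = {}")
  case True
  then show ?thesis
    using \<open>0 < q\<close> by simp
next
  case False
  obtain x r where xr: "\<And>i. i \<in> I \<Longrightarrow> 0 < r i \<and> cball (x i) (r i) \<subseteq> K i \<and> diameter (K i) \<le> q * r i"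
    using inscribed by metis
  have diam_pos: "0 < diameter (K i)" if "i \<in> I" for i
    using diameter_ge_radius_if_cball_subset[of "K i" "x i" "r i"] K xr that by force
  define \<rho> where "\<rho> = Min ((\<lambda>i. diameter (K i)) ` I)"
  have "0 < \<rho>"
    unfolding \<rho>_def using \<open>finite I\<close> False diam_pos by simp
  have \<rho>_le: "\<rho> \<le> diameter (K i)" if "i \<in> I" for i
    unfolding \<rho>_def using \<open>finite I\<close> that by simp
  define s where "s = \<rho> / q"
  have "0 < s"
    unfolding s_def using \<open>0 < \<rho>\<close> \<open>0 < q\<close> by simp
  \<comment> \<open>shrink each \<open>K i\<close> towards the common point \<open>c\<close> until its diameter is \<open>\<rho>\<close>; the inscribed
    balls of the shrunken sets have a common radius \<open>s\<close> and lie in \<open>cball c \<rho>\<close>\<close>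
  define y where "y i = c + (\<rho> / diameter (K i)) *\<^sub>R (x i - c)" for i
  have ball_sub: "ball (y i) s \<subseteq> interior (K i) \<inter> cball c \<rho>" if i: "i \<in> I" for i
  proof -
    define t where "t = \<rho> / diameter (K i)"
    have t: "0 < t" "t \<le> 1" "t * diameter (K i) = \<rho>"
      unfolding t_def using diam_pos[OF i] \<rho>_le[OF i] \<open>0 < \<rho>\<close> by auto
    have "s * diameter (K i) \<le> s * (q * r i)"
      using xr[OF i] \<open>0 < s\<close> by (intro mult_left_mono) auto
    then have "s \<le> t * r i"
      unfolding s_def t_def using diam_pos[OF i] \<open>0 < q\<close> by (simp add: field_simps)
    then have "ball (y i) s \<subseteq> ball (y i) (t * r i)"
      by (rule subset_ball)
    also have "\<dots> \<subseteq> K i \<inter> cball c \<rho>"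
      using homothetic_ball_subset[of "K i" c "x i" "r i" t] K[OF i] xr[OF i] t
      unfolding y_def t_def by auto
    finally show ?thesis
      by (meson interior_maximal le_inf_iff open_ball)
  qed
  have "disjoint_family_on (\<lambda>i. ball (y i) s) I"
    using disjoint ball_sub unfolding disjoint_family_on_def by blast
  then have "real (card I) * s ^ DIM('a) \<le> \<rho> ^ DIM('a)"
    using ball_sub \<open>finite I\<close> \<open>0 < s\<close> \<open>0 < \<rho>\<close> by (intro card_disjoint_balls_in_cball_le) auto
  also have "\<dots> = q ^ DIM('a) * s ^ DIM('a)"
    unfolding s_def using \<open>0 < q\<close> by (simp add: power_divide)
  finally show ?thesis
    using \<open>0 < s\<close> by simp
qed

section \<open>Piecewise linear functions and edge increments\<close>

lemma onorm_inner_eq_norm: "onorm (\<lambda>h. g \<bullet> h) = norm (g::'a::euclidean_space)"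
proof (rule antisym)
  show "onorm (\<lambda>h. g \<bullet> h) \<le> norm g"
    by (rule onorm_bound) (simp_all add: Cauchy_Schwarz_ineq2)
next
  show "norm g \<le> onorm (\<lambda>h. g \<bullet> h)"
  proof (cases "g = 0")
    case False
    have "norm (g \<bullet> g) / norm g \<le> onorm (\<lambda>h. g \<bullet> h)"
      using le_onorm[OF bounded_linear_inner_right[of g], of g] by simp
    then show ?thesis
      using False by (simp add: power2_norm_eq_inner[symmetric] power2_eq_square)
  qed (simp add: onorm_pos_le bounded_linear_inner_right)
qed

lemma H1_seminorm_nonneg: "0 \<le> H1_seminorm \<Omega> f"
  unfolding H1_seminorm_def
  by (cases "(\<lambda>x. (onorm (frechet_derivative f (at x)))\<^sup>2) integrable_on \<Omega>")
    (simp_all add: integral_nonneg not_integrable_integral)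

definition element_gradient :: "(pt \<Rightarrow> real) \<Rightarrow> pt set \<Rightarrow> pt" where
  "element_gradient f V = (SOME g. \<exists>c. \<forall>x\<in>convex hull V. f x = c + g \<bullet> x)"

lemma P1_space_diff: "v \<in> P1_space T \<Longrightarrow> w \<in> P1_space T \<Longrightarrow> (\<lambda>x. v x - w x) \<in> P1_space T"
  unfolding P1_space_def
proof (intro CollectI ballI)
  fix V
  assume v: "v \<in> {u. \<forall>V\<in>T. \<exists>c g. \<forall>x\<in>convex hull V. u x = c + g \<bullet> x}"
    and w: "w \<in> {u. \<forall>V\<in>T. \<exists>c g. \<forall>x\<in>convex hull V. u x = c + g \<bullet> x}" and V: "V \<in> T"
  obtain c1 g1 where 1: "\<forall>x\<in>convex hull V. v x = c1 + g1 \<bullet> x"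
    using v V by blast
  obtain c2 g2 where 2: "\<forall>x\<in>convex hull V. w x = c2 + g2 \<bullet> x"
    using w V by blast
  show "\<exists>c g. \<forall>x\<in>convex hull V. v x - w x = c + g \<bullet> x"
    using 1 2 by (intro exI[of _ "c1 - c2"] exI[of _ "g1 - g2"]) (auto simp: inner_diff_left)
qed

lemma element_gradient_affine:
  assumes "f \<in> P1_space T" "V \<in> T"
  obtains c where "\<And>x. x \<in> convex hull V \<Longrightarrow> f x = c + element_gradient f V \<bullet> x"
proof -
  have "\<exists>g c. \<forall>x\<in>convex hull V. f x = c + g \<bullet> x"
    using assms unfolding P1_space_def by blast
  then have "\<exists>c. \<forall>x\<in>convex hull V. f x = c + element_gradient f V \<bullet> x"
    unfolding element_gradient_def by (rule someI_ex)
  then show ?thesis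
    using that by metis
qed

lemma P1_increment:
  assumes "f \<in> P1_space T" "V \<in> T" "a \<in> convex hull V" "b \<in> convex hull V"
  shows "f b - f a = element_gradient f V \<bullet> (b - a)"
proof -
  obtain c where "\<And>x. x \<in> convex hull V \<Longrightarrow> f x = c + element_gradient f V \<bullet> x"
    using element_gradient_affine[OF assms(1,2)] by blast
  then show ?thesis
    using assms(3,4) by (simp add: inner_diff_right)
qed

lemma frechet_derivative_P1:
  assumes "f \<in> P1_space T" "V \<in> T" "x \<in> interior (convex hull V)"
  shows "frechet_derivative f (at x) = (\<lambda>h. element_gradient f V \<bullet> h)"
proof -
  obtain c where c: "\<And>y. y \<in> convex hull V \<Longrightarrow> f y = c + element_gradient f V \<bullet> y"
    using element_gradient_affine[OF assms(1,2)] by blast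
  have "((\<lambda>y. c + element_gradient f V \<bullet> y) has_derivative (\<lambda>h. element_gradient f V \<bullet> h)) (at x)"
    by (auto intro!: derivative_eq_intros)
  then have "(f has_derivative (\<lambda>h. element_gradient f V \<bullet> h)) (at x)"
    by (rule has_derivative_transform_within_open[OF _ open_interior assms(3)])
      (use c interior_subset in \<open>metis subsetD\<close>)
  then show ?thesis
    by (rule frechet_derivative_at[symmetric])
qed

definition edge_start :: "pt set \<Rightarrow> pt" where
  "edge_start E = fst (edge_ends E)"

definition edge_end :: "pt set \<Rightarrow> pt" where
  "edge_end E = snd (edge_ends E)"

definition edge_increment :: "(pt \<Rightarrow> real) \<Rightarrow> pt set \<Rightarrow> real" where
  "edge_increment f E = f (edge_end E) - f (edge_start E)"

definition unit_disc_measure :: real where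
  "unit_disc_measure = measure lborel (ball (0::pt) 1)"

lemma unit_disc_measure_pos: "0 < unit_disc_measure"
  unfolding unit_disc_measure_def by (rule content_ball_pos) simp

lemma measure_ball_pt: "0 \<le> r \<Longrightarrow> measure lborel (ball (c::pt) r) = r\<^sup>2 * unit_disc_measure"
  unfolding unit_disc_measure_def using content_ball_conv_unit_ball[of r c]
  by (simp add: power2_eq_square)

lemma edge_length_eq: "edge_length E = dist (edge_start E) (edge_end E)"
  unfolding edge_length_def edge_start_def edge_end_def ..

lemma edge_tangent_eq:
  "edge_tangent E = (1 / norm (edge_end E - edge_start E)) *\<^sub>R (edge_end E - edge_start E)"
  unfolding edge_tangent_def edge_start_def edge_end_def by (simp add: case_prod_unfold Let_def)

lemma edge_integral_eq:
  "edge_integral E f = edge_length E *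
     integral {0..1} (\<lambda>s. f (edge_start E + s *\<^sub>R (edge_end E - edge_start E)))"
  unfolding edge_integral_def edge_length_def edge_start_def edge_end_def by (simp add: case_prod_unfold Let_def)

section \<open>The smoothness indicator\<close>

lemma xi_node_eq_abs_sum_ratio:
  "xi_node \<Omega> T w c = abs_sum_ratio (\<lambda>y. w c - w y) (neighbours \<Omega> T c)"
  unfolding xi_node_def abs_sum_ratio_def Let_def ..

lemma xi_node_bounds: "0 \<le> xi_node \<Omega> T w c" "xi_node \<Omega> T w c \<le> 1"
  unfolding xi_node_eq_abs_sum_ratio by (rule abs_sum_ratio_bounds)+

lemma alpha_edge_eq:
  assumes "0 \<le> p"
  shows "alpha_edge \<Omega> T p w E
    = max (xi_node \<Omega> T w (edge_start E)) (xi_node \<Omega> T w (edge_end E)) powr p"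
proof -
  have "alpha_edge \<Omega> T p w E = Sup ((\<lambda>s. ((1 - s) * xi_node \<Omega> T w (edge_start E)
      + s * xi_node \<Omega> T w (edge_end E)) powr p) ` {0..1})"
    unfolding alpha_edge_def edge_start_def edge_end_def by (simp add: case_prod_unfold Let_def)
  also have "\<dots> = max (xi_node \<Omega> T w (edge_start E)) (xi_node \<Omega> T w (edge_end E)) powr p"
    using assms xi_node_bounds(1) by (intro Sup_powr_convex_combination)
  finally show ?thesis .
qed

lemma alpha_edge_bounds:
  assumes "0 \<le> p"
  shows "0 \<le> alpha_edge \<Omega> T p w E" "alpha_edge \<Omega> T p w E \<le> 1"
proof -
  define m where "m = max (xi_node \<Omega> T w (edge_start E)) (xi_node \<Omega> T w (edge_end E))"
  have "0 \<le> m" "m \<le> 1"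
    unfolding m_def by (simp_all add: xi_node_bounds le_max_iff_disj)
  then show "0 \<le> alpha_edge \<Omega> T p w E" "alpha_edge \<Omega> T p w E \<le> 1"
    unfolding alpha_edge_eq[OF assms] m_def[symmetric] using assms by (simp_all add: powr_le1)
qed

definition nodal_variation :: "pt set \<Rightarrow> pt set set \<Rightarrow> (pt \<Rightarrow> real) \<Rightarrow> pt \<Rightarrow> real" where
  "nodal_variation \<Omega> T u c = (\<Sum>y\<in>neighbours \<Omega> T c. \<bar>u c - u y\<bar>)"

lemma xi_node_diff_le:
  "\<bar>xi_node \<Omega> T v c - xi_node \<Omega> T w c\<bar> * nodal_variation \<Omega> T w c
    \<le> 2 * nodal_variation \<Omega> T (\<lambda>x. v x - w x) c"
  unfolding xi_node_eq_abs_sum_ratio nodal_variation_def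
  using abs_sum_ratio_diff_le[of "\<lambda>y. v c - v y" "neighbours \<Omega> T c" "\<lambda>y. w c - w y"]
  by (simp add: algebra_simps)

lemma alpha_edge_diff_le:
  assumes "1 \<le> p"
  shows "\<bar>alpha_edge \<Omega> T p v E - alpha_edge \<Omega> T p w E\<bar>
    \<le> p * (\<bar>xi_node \<Omega> T v (edge_start E) - xi_node \<Omega> T w (edge_start E)\<bar>
      + \<bar>xi_node \<Omega> T v (edge_end E) - xi_node \<Omega> T w (edge_end E)\<bar>)"
proof -
  define a b a' b' where "a = xi_node \<Omega> T v (edge_start E)" and "b = xi_node \<Omega> T v (edge_end E)"
    and "a' = xi_node \<Omega> T w (edge_start E)" and "b' = xi_node \<Omega> T w (edge_end E)"
  have "\<bar>max a b powr p - max a' b' powr p\<bar> \<le> p * \<bar>max a b - max a' b'\<bar>"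
    unfolding a_def b_def a'_def b'_def using xi_node_bounds assms
    by (intro powr_diff_le_unit_interval) (simp_all add: le_max_iff_disj)
  also have "\<dots> \<le> p * (\<bar>a - a'\<bar> + \<bar>b - b'\<bar>)"
    using assms by (intro mult_left_mono) auto
  finally show ?thesis
    unfolding alpha_edge_eq[OF order_trans[OF zero_le_one assms]] a_def b_def a'_def b'_def .
qed

section \<open>Estimates on a shape-regular mesh\<close>

locale shape_regular_mesh =
  fixes \<Omega> :: "pt set" and T :: "pt set set" and \<sigma> :: real
  assumes open_domain: "open \<Omega>" and lipschitz_domain: "lipschitz_boundary \<Omega>"
    and conforming: "conforming_triangulation \<Omega> T" and shape_regular: "shape_regular \<sigma> T"
begin

lemma finite_mesh: "finite T"
  using conforming unfolding conforming_triangulation_def by blast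

lemma card_element: "V \<in> T \<Longrightarrow> card V = 3"
  using conforming unfolding conforming_triangulation_def by auto

lemma finite_element: "V \<in> T \<Longrightarrow> finite V"
  using card_element by (intro card_ge_0_finite) simp

lemma finite_mesh_nodes: "finite (\<Union>T)"
  by (rule finite_Union[OF finite_mesh finite_element])

lemma element_bounded: "V \<in> T \<Longrightarrow> bounded (convex hull V)"
  by (simp add: finite_element finite_imp_bounded_convex_hull)

lemma element_closed: "V \<in> T \<Longrightarrow> closed (convex hull V)"
  by (simp add: finite_element finite_imp_compact_convex_hull compact_imp_closed)

lemma dist_le_diameter_element:
  "V \<in> T \<Longrightarrow> x \<in> convex hull V \<Longrightarrow> y \<in> convex hull V \<Longrightarrow> dist x y \<le> diameter (convex hull V)"
  using element_bounded diameter_bounded_bound by blast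

lemma diameter_element_pos: "V \<in> T \<Longrightarrow> 0 < diameter (convex hull V)"
proof -
  assume V: "V \<in> T"
  obtain a b c where "V = {a, b, c}" "a \<noteq> b"
    using card_element[OF V] unfolding card_3_iff by blast
  then have "a \<in> convex hull V" "b \<in> convex hull V"
    by (simp_all add: hull_inc)
  then have "0 < dist a b" "dist a b \<le> diameter (convex hull V)"
    using dist_le_diameter_element[OF V] \<open>a \<noteq> b\<close> by simp_all
  then show ?thesis
    by linarith
qed

lemma diameter_element_le_mesh_size: "V \<in> T \<Longrightarrow> diameter (convex hull V) \<le> mesh_size T"
  unfolding mesh_size_def using finite_mesh by simp

lemma mesh_size_pos: "0 < mesh_size T"
proof -
  have "T \<noteq> {}"
    using conforming unfolding conforming_triangulation_def by blast
  then obtain V where "V \<in> T"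
    by blast
  then show ?thesis
    using diameter_element_pos diameter_element_le_mesh_size by (meson less_le_trans)
qed

lemma element_inscribed_ball:
  assumes V: "V \<in> T"
  obtains x r where "0 < r" "cball x r \<subseteq> convex hull V" "diameter (convex hull V) \<le> 4 * \<sigma> * r"
proof -
  define K where "K = convex hull V"
  define A where "A = {r. \<exists>c. cball c r \<subseteq> K}"
  have diam_le: "diameter K \<le> \<sigma> * (2 * Sup A)"
    using shape_regular V unfolding shape_regular_def inball_diam_def K_def A_def by blast
  obtain a b c where "V = {a, b, c}"
    using card_element[OF V] unfolding card_3_iff by blast
  then have "a \<in> K"
    unfolding K_def by (simp add: hull_inc)
  then have "0 \<in> A"
    unfolding A_def by (intro CollectI exI[of _ a]) auto
  have "bdd_above A"
    unfolding A_def K_def by (rule bdd_above_inradii[OF element_bounded[OF V]])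
  have "0 < \<sigma> * (2 * Sup A)"
    using diam_le diameter_element_pos[OF V] unfolding K_def by linarith
  moreover have "0 \<le> Sup A"
    using \<open>0 \<in> A\<close> \<open>bdd_above A\<close> by (simp add: cSup_upper)
  ultimately have "0 < Sup A" "0 < \<sigma>"
    by (auto simp: zero_less_mult_iff)
  \<comment> \<open>the supremum need not be attained, so take a ball of more than half the inradius\<close>
  then obtain r where "r \<in> A" "Sup A / 2 < r"
    using less_cSup_iff[of A "Sup A / 2"] \<open>0 \<in> A\<close> \<open>bdd_above A\<close> by auto
  then obtain x where "cball x r \<subseteq> K"
    unfolding A_def by blast
  moreover have "\<sigma> * (2 * Sup A) \<le> \<sigma> * (4 * r)"
    using \<open>Sup A / 2 < r\<close> \<open>0 < \<sigma>\<close> by (intro mult_left_mono) auto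
  then have "diameter K \<le> 4 * \<sigma> * r"
    using diam_le by simp
  moreover have "0 < r"
    using \<open>0 < Sup A\<close> \<open>Sup A / 2 < r\<close> by linarith
  ultimately show ?thesis
    using that unfolding K_def by blast
qed

lemma sigma_pos: "0 < \<sigma>"
proof -
  have "T \<noteq> {}"
    using conforming unfolding conforming_triangulation_def by blast
  then obtain V where V: "V \<in> T"
    by blast
  obtain x r where "0 < r" "diameter (convex hull V) \<le> 4 * \<sigma> * r"
    using element_inscribed_ball[OF V] by blast
  then have "0 < 4 * \<sigma> * r"
    using diameter_element_pos[OF V] by linarith
  then show ?thesis
    using \<open>0 < r\<close> by (metis zero_less_mult_pos2 zero_less_mult_iff zero_less_numeral)
qed

lemma diameter_squared_le_area:
  assumes V: "V \<in> T"
  shows "(diameter (convex hull V))\<^sup>2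
    \<le> 16 * \<sigma>\<^sup>2 / unit_disc_measure * measure lborel (interior (convex hull V))"
proof -
  obtain x r where r: "0 < r" "cball x r \<subseteq> convex hull V" "diameter (convex hull V) \<le> 4 * \<sigma> * r"
    using element_inscribed_ball[OF V] by blast
  have "ball x r \<subseteq> interior (convex hull V)"
    using r by (meson ball_subset_cball interior_maximal open_ball order_trans)
  then have "measure lborel (ball x r) \<le> measure lborel (interior (convex hull V))"
  proof (rule measure_mono_fmeasurable)
    show "interior (convex hull V) \<in> fmeasurable lborel"
      unfolding fmeasurable_def
      using emeasure_bounded_finite[OF bounded_interior[OF element_bounded[OF V]]] by simp
  qed simp
  then have area: "r\<^sup>2 * unit_disc_measure \<le> measure lborel (interior (convex hull V))"
    using measure_ball_pt r by simp
  have "(diameter (convex hull V))\<^sup>2 \<le> (4 * \<sigma> * r)\<^sup>2"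
    using r diameter_element_pos[OF V] by (intro power_mono) auto
  also have "\<dots> = 16 * \<sigma>\<^sup>2 / unit_disc_measure * (r\<^sup>2 * unit_disc_measure)"
    using unit_disc_measure_pos by (simp add: field_simps power2_eq_square)
  also have "\<dots> \<le> 16 * \<sigma>\<^sup>2 / unit_disc_measure * measure lborel (interior (convex hull V))"
    using area unit_disc_measure_pos by (intro mult_left_mono) auto
  finally show ?thesis .
qed

lemma interior_elements_disjoint:
  assumes V: "V \<in> T" and V': "V' \<in> T" and "V \<noteq> V'"
  shows "interior (convex hull V) \<inter> interior (convex hull V') = {}"
proof -
  have "\<not> V \<subseteq> V'"
  proof
    assume "V \<subseteq> V'"
    then have "V = V'"
      using card_element[OF V] card_element[OF V'] finite_element[OF V'] by (intro card_subset_eq) auto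
    then show False
      using \<open>V \<noteq> V'\<close> by blast
  qed
  then obtain v where v: "v \<in> V" "v \<notin> V'"
    by blast
  have "card (V - {v}) = 2"
    using card_element[OF V] v finite_element[OF V] by simp
  then obtain a b where "V - {v} = {a, b}"
    unfolding card_2_iff by blast
  then have "V \<inter> V' \<subseteq> {a, b}"
    using v by blast
  \<comment> \<open>the common face is at most an edge, which has empty interior in the plane\<close>
  then have "convex hull (V \<inter> V') \<subseteq> closed_segment a b"
    by (simp add: hull_mono segment_convex_hull)
  then have "interior (convex hull (V \<inter> V')) \<subseteq> interior (closed_segment a b)"
    by (rule interior_mono)
  then have "interior (convex hull (V \<inter> V')) = {}"
    by (simp add: interior_closed_segment)
  moreover have "convex hull V \<inter> convex hull V' = convex hull (V \<inter> V')"
    using conforming V V' \<open>V \<noteq> V'\<close> unfolding conforming_triangulation_def by blast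
  ultimately show ?thesis
    by (metis interior_Int)
qed

lemma interior_element_subset_domain: "V \<in> T \<Longrightarrow> interior (convex hull V) \<subseteq> \<Omega>"
proof -
  assume "V \<in> T"
  then have "convex hull V \<subseteq> closure \<Omega>"
    using conforming unfolding conforming_triangulation_def by blast
  then show ?thesis
    using interior_closure_subset_if_lipschitz_boundary[OF open_domain lipschitz_domain]
      interior_mono by blast
qed

lemma card_elements_at_node: "real (card {V\<in>T. c \<in> V}) \<le> 16 * \<sigma>\<^sup>2"
proof -
  have "real (card {V\<in>T. c \<in> V}) \<le> (4 * \<sigma>) ^ DIM(pt)"
  proof (rule card_le_if_disjoint_interiors_and_inscribed_balls[where K = "\<lambda>V. convex hull V"])
    show "disjoint_family_on (\<lambda>V. interior (convex hull V)) {V\<in>T. c \<in> V}"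
      using interior_elements_disjoint unfolding disjoint_family_on_def by blast
    show "\<exists>x r. 0 < r \<and> cball x r \<subseteq> convex hull V \<and> diameter (convex hull V) \<le> 4 * \<sigma> * r"
      if "V \<in> {V\<in>T. c \<in> V}" for V
      using element_inscribed_ball that by blast
    show "convex (convex hull V) \<and> bounded (convex hull V) \<and> c \<in> convex hull V"
      if "V \<in> {V\<in>T. c \<in> V}" for V
      using that element_bounded by (simp add: hull_inc)
  qed (use finite_mesh sigma_pos in simp_all)
  then show ?thesis
    by (simp add: power2_eq_square)
qed

lemma union_elements_eq_closure: "(\<Union>V\<in>T. convex hull V) = closure \<Omega>"
  using conforming unfolding conforming_triangulation_def by blast

lemma sum_interior_indicators_eq:
  assumes W: "W \<in> T" and x: "x \<in> interior (convex hull W)"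
  shows "(\<Sum>V\<in>T. if x \<in> interior (convex hull V) then a V else 0) = a W"
proof -
  have "(\<Sum>V\<in>T. if x \<in> interior (convex hull V) then a V else 0) = (\<Sum>V\<in>T. if V = W then a V else 0)"
  proof (rule sum.cong[OF refl])
    fix V
    assume "V \<in> T"
    then show "(if x \<in> interior (convex hull V) then a V else 0) = (if V = W then a V else 0)"
      using interior_elements_disjoint[OF \<open>V \<in> T\<close> W] x by auto
  qed
  also have "\<dots> = a W"
    using W finite_mesh by (simp add: sum.delta')
  finally show ?thesis .
qed

lemma has_integral_sum_interior_indicators:
  "((\<lambda>x. \<Sum>V\<in>T. if x \<in> interior (convex hull V) then a V else 0)
      has_integral (\<Sum>V\<in>T. a V * measure lborel (interior (convex hull V)))) \<Omega>"
proof (rule has_integral_sum[OF finite_mesh])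
  fix V
  assume V: "V \<in> T"
  define A where "A = interior (convex hull V)"
  have "((\<lambda>x. 1) has_integral measure lborel A) A"
  proof (rule has_integral_measure_lborel)
    show "emeasure lborel A < \<infinity>"
      unfolding A_def using emeasure_bounded_finite[OF bounded_interior[OF element_bounded[OF V]]] .
  qed (simp add: A_def)
  then have "((\<lambda>x. a V * 1) has_integral a V * measure lborel A) A"
    by (rule has_integral_mult_right)
  then show "((\<lambda>x. if x \<in> A then a V else 0) has_integral a V * measure lborel A) \<Omega>"
    using has_integral_restrict[of A \<Omega>] interior_element_subset_domain[OF V] unfolding A_def
    by simp
qed

lemma H1_seminorm_P1_squared:
  assumes f: "f \<in> P1_space T"
  shows "(H1_seminorm \<Omega> f)\<^sup>2
    = (\<Sum>V\<in>T. (norm (element_gradient f V))\<^sup>2 * measure lborel (interior (convex hull V)))"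
proof -
  define F where "F x = (onorm (frechet_derivative f (at x)))\<^sup>2" for x
  define G where "G x = (\<Sum>V\<in>T. if x \<in> interior (convex hull V) then (norm (element_gradient f V))\<^sup>2 else 0)"
    for x
  define N where "N = (\<Union>V\<in>T. frontier (convex hull V))"
  have "negligible N"
    unfolding N_def using finite_mesh by (intro negligible_Union) (auto intro: negligible_convex_frontier)
  have G_eq_F: "G x = F x" if x: "x \<in> \<Omega> - N" for x
  proof -
    have "x \<in> closure \<Omega>"
      using x closure_subset by blast
    then obtain W where W: "W \<in> T" "x \<in> convex hull W"
      using union_elements_eq_closure by blast
    moreover have "x \<notin> frontier (convex hull W)"
      using x W unfolding N_def by blast
    ultimately have xW: "x \<in> interior (convex hull W)"
      using element_closed[OF W(1)] by (simp add: frontier_def closure_closed)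
    show ?thesis
      unfolding G_def F_def frechet_derivative_P1[OF f W(1) xW] onorm_inner_eq_norm
      by (rule sum_interior_indicators_eq[OF W(1) xW, where a = "\<lambda>V. (norm (element_gradient f V))\<^sup>2"])
  qed
  have "(G has_integral (\<Sum>V\<in>T. (norm (element_gradient f V))\<^sup>2 * measure lborel (interior (convex hull V)))) \<Omega>"
    unfolding G_def by (rule has_integral_sum_interior_indicators)
  then have "(F has_integral (\<Sum>V\<in>T. (norm (element_gradient f V))\<^sup>2 * measure lborel (interior (convex hull V)))) \<Omega>"
    by (rule has_integral_spike[OF \<open>negligible N\<close>, rotated]) (use G_eq_F in auto)
  moreover have "0 \<le> (\<Sum>V\<in>T. (norm (element_gradient f V))\<^sup>2 * measure lborel (interior (convex hull V)))"
    by (intro sum_nonneg mult_nonneg_nonneg) auto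
  ultimately show ?thesis
    unfolding H1_seminorm_def F_def[symmetric] by (simp add: integral_unique)
qed

abbreviation mesh_edges :: "pt set set" where
  "mesh_edges \<equiv> interior_edges \<Omega> T"

lemma interior_edge_endpoints:
  assumes "E \<in> mesh_edges"
  shows "edge_start E \<noteq> edge_end E" "E = {edge_start E, edge_end E}"
    "\<exists>V\<in>T. edge_start E \<in> V \<and> edge_end E \<in> V"
proof -
  obtain a b where ab: "E = {a, b}" "a \<noteq> b" "\<exists>V\<in>T. a \<in> V \<and> b \<in> V"
    using assms unfolding interior_edges_def by blast
  then have "\<exists>ab. E = {fst ab, snd ab} \<and> fst ab \<noteq> snd ab"
    by (intro exI[of _ "(a, b)"]) simp
  then have se: "E = {edge_start E, edge_end E}" "edge_start E \<noteq> edge_end E"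
    unfolding edge_start_def edge_end_def edge_ends_def by (metis (mono_tags, lifting) someI_ex)+
  then have "{edge_start E, edge_end E} = {a, b}"
    using ab(1) by simp
  then have "edge_start E = a \<and> edge_end E = b \<or> edge_start E = b \<and> edge_end E = a"
    unfolding doubleton_eq_iff .
  with se show "edge_start E \<noteq> edge_end E" "E = {edge_start E, edge_end E}"
    "\<exists>V\<in>T. edge_start E \<in> V \<and> edge_end E \<in> V"
    using ab(3) by blast+
qed

lemma finite_mesh_edges: "finite mesh_edges"
proof (rule finite_subset)
  show "mesh_edges \<subseteq> Pow (\<Union>T)"
    unfolding interior_edges_def by auto
qed (rule finite_Pow_iff[THEN iffD2, OF finite_mesh_nodes])

lemma abs_edge_increment:
  assumes "E \<in> mesh_edges" "E = {x, y}"
  shows "\<bar>edge_increment f E\<bar> = \<bar>f x - f y\<bar>"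
proof -
  have "{edge_start E, edge_end E} = {x, y}"
    using interior_edge_endpoints(2)[OF assms(1)] assms(2) by simp
  then show ?thesis
    unfolding edge_increment_def doubleton_eq_iff by (auto simp: abs_minus_commute)
qed

definition edge_element :: "pt set \<Rightarrow> pt set" where
  "edge_element E = (SOME V. V \<in> T \<and> edge_start E \<in> V \<and> edge_end E \<in> V)"

lemma edge_element_mem:
  assumes "E \<in> mesh_edges"
  shows "edge_element E \<in> T" "edge_start E \<in> edge_element E" "edge_end E \<in> edge_element E"
proof -
  have "\<exists>V. V \<in> T \<and> edge_start E \<in> V \<and> edge_end E \<in> V"
    using interior_edge_endpoints(3)[OF assms] by blast
  from someI_ex[OF this] show "edge_element E \<in> T" "edge_start E \<in> edge_element E"
    "edge_end E \<in> edge_element E"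
    unfolding edge_element_def by simp_all
qed

lemma edge_element_hull:
  "E \<in> mesh_edges \<Longrightarrow> edge_start E \<in> convex hull edge_element E"
  "E \<in> mesh_edges \<Longrightarrow> edge_end E \<in> convex hull edge_element E"
  using edge_element_mem by (simp_all add: hull_inc)

lemma edge_length_pos: "E \<in> mesh_edges \<Longrightarrow> 0 < edge_length E"
  using interior_edge_endpoints(1) by (simp add: edge_length_eq)

lemma edge_length_le_mesh_size: "E \<in> mesh_edges \<Longrightarrow> edge_length E \<le> mesh_size T"
  using dist_le_diameter_element[OF edge_element_mem(1) edge_element_hull]
    diameter_element_le_mesh_size[OF edge_element_mem(1)]
  unfolding edge_length_eq by (meson order_trans)

lemma edge_increment_eq_gradient:
  assumes "f \<in> P1_space T" "E \<in> mesh_edges"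
  shows "edge_increment f E = element_gradient f (edge_element E) \<bullet> (edge_end E - edge_start E)"
  unfolding edge_increment_def
  using P1_increment[OF assms(1) edge_element_mem(1) edge_element_hull, OF assms(2) assms(2) assms(2)] .

lemma edge_increment_squared_le:
  assumes f: "f \<in> P1_space T" and E: "E \<in> mesh_edges"
  defines "V \<equiv> edge_element E"
  shows "(edge_increment f E)\<^sup>2 \<le> 16 * \<sigma>\<^sup>2 / unit_disc_measure *
    ((norm (element_gradient f V))\<^sup>2 * measure lborel (interior (convex hull V)))"
proof -
  define g h where "g = element_gradient f V" and "h = diameter (convex hull V)"
  have V: "V \<in> T"
    unfolding V_def using edge_element_mem(1)[OF E] .
  have "\<bar>edge_increment f E\<bar> \<le> norm g * norm (edge_end E - edge_start E)"
    unfolding edge_increment_eq_gradient[OF f E] g_def V_def by (rule Cauchy_Schwarz_ineq2)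
  also have "\<dots> \<le> norm g * h"
    unfolding h_def V_def using dist_le_diameter_element[OF edge_element_mem(1) edge_element_hull, OF E E E]
    by (intro mult_left_mono) (auto simp: dist_norm norm_minus_commute)
  finally have "(edge_increment f E)\<^sup>2 \<le> (norm g)\<^sup>2 * h\<^sup>2"
    by (metis abs_ge_zero power2_abs power_mono power_mult_distrib)
  also have "\<dots> \<le> (norm g)\<^sup>2 * (16 * \<sigma>\<^sup>2 / unit_disc_measure * measure lborel (interior (convex hull V)))"
    unfolding h_def using diameter_squared_le_area[OF V] by (intro mult_left_mono) auto
  finally show ?thesis
    unfolding g_def by (simp add: ac_simps)
qed

lemma interior_edge_subset_edge_element: "E \<in> mesh_edges \<Longrightarrow> E \<subseteq> edge_element E"
proof
  fix x
  assume "E \<in> mesh_edges" "x \<in> E"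
  then have "x = edge_start E \<or> x = edge_end E"
    using interior_edge_endpoints(2) by (metis empty_iff insert_iff)
  then show "x \<in> edge_element E"
    using edge_element_mem(2,3)[OF \<open>E \<in> mesh_edges\<close>] by blast
qed

lemma card_edges_of_element_le:
  assumes V: "V \<in> T"
  shows "real (card {E \<in> mesh_edges. edge_element E = V}) \<le> 8"
proof -
  have "{E \<in> mesh_edges. edge_element E = V} \<subseteq> Pow V"
    using interior_edge_subset_edge_element by blast
  then have "card {E \<in> mesh_edges. edge_element E = V} \<le> card (Pow V)"
    using finite_element[OF V] by (intro card_mono) auto
  then show ?thesis
    using card_element[OF V] finite_element[OF V] by (simp add: card_Pow)
qed

lemma L2_set_edge_increment_le:
  assumes f: "f \<in> P1_space T"
  shows "L2_set (edge_increment f) mesh_edges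
    \<le> sqrt (128 * \<sigma>\<^sup>2 / unit_disc_measure) * H1_seminorm \<Omega> f"
proof -
  define \<Phi> where "\<Phi> V = 16 * \<sigma>\<^sup>2 / unit_disc_measure *
      ((norm (element_gradient f V))\<^sup>2 * measure lborel (interior (convex hull V)))" for V
  have "(\<Sum>E\<in>mesh_edges. (edge_increment f E)\<^sup>2) \<le> (\<Sum>E\<in>mesh_edges. \<Phi> (edge_element E))"
    unfolding \<Phi>_def by (intro sum_mono edge_increment_squared_le[OF f])
  also have "\<dots> \<le> 8 * (\<Sum>V\<in>T. \<Phi> V)"
  proof (rule sum_comp_le_fibre_bound[OF finite_mesh_edges finite_mesh])
    show "edge_element ` mesh_edges \<subseteq> T"
      using edge_element_mem(1) by blast
    show "0 \<le> \<Phi> V" for V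
      unfolding \<Phi>_def using unit_disc_measure_pos by (intro mult_nonneg_nonneg) auto
  qed (rule card_edges_of_element_le)
  also have "\<dots> = 128 * \<sigma>\<^sup>2 / unit_disc_measure * (H1_seminorm \<Omega> f)\<^sup>2"
    unfolding \<Phi>_def H1_seminorm_P1_squared[OF f] by (simp add: sum_distrib_left mult.assoc)
  finally have "L2_set (edge_increment f) mesh_edges
      \<le> sqrt (128 * \<sigma>\<^sup>2 / unit_disc_measure * (H1_seminorm \<Omega> f)\<^sup>2)"
    unfolding L2_set_def by (rule real_sqrt_le_mono)
  also have "\<dots> = sqrt (128 * \<sigma>\<^sup>2 / unit_disc_measure) * H1_seminorm \<Omega> f"
    using H1_seminorm_nonneg[of \<Omega> f] by (metis abs_of_nonneg real_sqrt_abs real_sqrt_mult)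
  finally show ?thesis .
qed

lemma P1_affine_along_edge:
  assumes f: "f \<in> P1_space T" and E: "E \<in> mesh_edges" and s: "0 < s" "s < 1"
    and \<tau>: "\<tau> \<in> ball 0 (min s (1 - s) * edge_length E)"
  defines "x \<equiv> edge_start E + s *\<^sub>R (edge_end E - edge_start E)" and "t \<equiv> edge_tangent E"
    and "g \<equiv> element_gradient f (edge_element E)"
  shows "f x + \<tau> * (g \<bullet> t) = f (x + \<tau> *\<^sub>R t)"
proof -
  define a b where "a = edge_start E" and "b = edge_end E"
  have "a \<noteq> b"
    unfolding a_def b_def using interior_edge_endpoints(1)[OF E] .
  have "closed_segment a b \<subseteq> convex hull edge_element E"
    unfolding a_def b_def segment_convex_hull using edge_element_mem(2,3)[OF E] by (simp add: hull_mono)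
  \<comment> \<open>near \<open>x\<close> the line through the edge stays in the element, where \<open>f\<close> is affine\<close>
  then have on_element: "x + \<tau>' *\<^sub>R t \<in> convex hull edge_element E"
    if "\<bar>\<tau>'\<bar> < min s (1 - s) * edge_length E" for \<tau>'
    using shifted_point_in_closed_segment[OF \<open>a \<noteq> b\<close> s, of \<tau>'] that
    unfolding x_def t_def a_def b_def edge_tangent_eq edge_length_eq
    by (auto simp: dist_norm norm_minus_commute)
  have "0 < min s (1 - s) * edge_length E"
    using s edge_length_pos[OF E] by simp
  then have "f (x + \<tau> *\<^sub>R t) - f (x + 0 *\<^sub>R t) = g \<bullet> ((x + \<tau> *\<^sub>R t) - (x + 0 *\<^sub>R t))"
    unfolding g_def using \<tau> by (intro P1_increment[OF f edge_element_mem(1)[OF E]] on_element) auto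
  then show ?thesis
    by simp
qed

lemma tderiv_P1_on_edge:
  assumes f: "f \<in> P1_space T" and E: "E \<in> mesh_edges" and s: "0 < s" "s < 1"
  shows "tderiv f (edge_tangent E) (edge_start E + s *\<^sub>R (edge_end E - edge_start E))
    = edge_increment f E / edge_length E"
proof -
  define x t g where "x = edge_start E + s *\<^sub>R (edge_end E - edge_start E)"
    and "t = edge_tangent E" and "g = element_gradient f (edge_element E)"
  have "((\<lambda>\<tau>. f x + \<tau> * (g \<bullet> t)) has_real_derivative (g \<bullet> t)) (at 0)"
    by (auto intro!: derivative_eq_intros)
  then have "((\<lambda>\<tau>. f x + \<tau> * (g \<bullet> t)) has_vector_derivative (g \<bullet> t)) (at 0)"
    by (simp add: has_real_derivative_iff_has_vector_derivative)
  moreover have "0 \<in> ball 0 (min s (1 - s) * edge_length E)"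
    using s edge_length_pos[OF E] by simp
  ultimately have "((\<lambda>\<tau>. f (x + \<tau> *\<^sub>R t)) has_vector_derivative (g \<bullet> t)) (at 0)"
    using P1_affine_along_edge[OF f E s] unfolding x_def t_def g_def
    by (rule has_vector_derivative_transform_within_open[OF _ open_ball])
  then have "tderiv f t x = g \<bullet> t"
    unfolding tderiv_def by (rule vector_derivative_at)
  also have "g \<bullet> t = edge_increment f E / edge_length E"
    unfolding t_def g_def edge_tangent_eq edge_increment_eq_gradient[OF f E] edge_length_eq
    by (simp add: dist_norm norm_minus_commute)
  finally show ?thesis
    unfolding x_def t_def .
qed

lemma edge_integral_tderiv_product:
  assumes u: "u \<in> P1_space T" and v: "v \<in> P1_space T" and E: "E \<in> mesh_edges"
  shows "edge_integral E (\<lambda>x. tderiv u (edge_tangent E) x * tderiv v (edge_tangent E) x)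
    = edge_increment u E * edge_increment v E / edge_length E"
proof -
  define k where "k = (edge_increment u E / edge_length E) * (edge_increment v E / edge_length E)"
  define \<gamma> where "\<gamma> s = edge_start E + s *\<^sub>R (edge_end E - edge_start E)" for s :: real
  have "integral {0..1} (\<lambda>s. tderiv u (edge_tangent E) (\<gamma> s) * tderiv v (edge_tangent E) (\<gamma> s))
      = integral {0..1} (\<lambda>s::real. k)"
  proof (rule integral_spike[of "{0, 1}"])
    fix s :: real
    assume "s \<in> {0..1} - {0, 1}"
    then show "k = tderiv u (edge_tangent E) (\<gamma> s) * tderiv v (edge_tangent E) (\<gamma> s)"
      unfolding k_def \<gamma>_def using tderiv_P1_on_edge[OF u E] tderiv_P1_on_edge[OF v E] by simp
  qed simp
  then show ?thesis
    unfolding edge_integral_eq \<gamma>_def[symmetric] k_def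
    using edge_length_pos[OF E] by (simp add: field_simps power2_eq_square)
qed

lemma d_h_P1_eq:
  assumes "u \<in> P1_space T" "v \<in> P1_space T"
  shows "d_h \<Omega> T p \<gamma> w u v = (\<Sum>E\<in>mesh_edges.
    \<gamma> * edge_length E * alpha_edge \<Omega> T p w E * (edge_increment u E * edge_increment v E))"
  unfolding d_h_def
proof (rule sum.cong[OF refl])
  fix E
  assume "E \<in> mesh_edges"
  then show "\<gamma> * (edge_length E)\<^sup>2 * alpha_edge \<Omega> T p w E *
      edge_integral E (\<lambda>x. tderiv u (edge_tangent E) x * tderiv v (edge_tangent E) x)
    = \<gamma> * edge_length E * alpha_edge \<Omega> T p w E * (edge_increment u E * edge_increment v E)"
    unfolding edge_integral_tderiv_product[OF assms \<open>E \<in> mesh_edges\<close>]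
    using edge_length_pos by (simp add: field_simps power2_eq_square)
qed

lemma finite_neighbours: "finite (neighbours \<Omega> T c)"
  by (rule finite_subset[OF _ finite_mesh_nodes]) (auto simp: neighbours_def mesh_nodes_def)

lemma neighbours_subset: "neighbours \<Omega> T c \<subseteq> \<Union>{V\<in>T. c \<in> V}"
proof
  fix y
  assume "y \<in> neighbours \<Omega> T c"
  then have "{c, y} \<in> mesh_edges"
    unfolding neighbours_def by blast
  then obtain a b V where "{c, y} = {a, b}" "V \<in> T" "a \<in> V" "b \<in> V"
    unfolding interior_edges_def by blast
  then show "y \<in> \<Union>{V\<in>T. c \<in> V}"
    by (auto simp: doubleton_eq_iff)
qed

lemma card_neighbours_le: "real (card (neighbours \<Omega> T c)) \<le> 48 * \<sigma>\<^sup>2"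
proof -
  have "card (neighbours \<Omega> T c) \<le> card (\<Union>{V\<in>T. c \<in> V})"
    using neighbours_subset finite_mesh finite_element by (intro card_mono) auto
  also have "\<dots> \<le> (\<Sum>V\<in>{V\<in>T. c \<in> V}. card V)"
    by (rule card_Union_le_sum_card)
  also have "\<dots> = 3 * card {V\<in>T. c \<in> V}"
    using card_element by simp
  finally show ?thesis
    using card_elements_at_node[of c] by linarith
qed

lemma interior_edge_neighbours:
  assumes "E \<in> mesh_edges"
  shows "edge_end E \<in> neighbours \<Omega> T (edge_start E)" "edge_start E \<in> neighbours \<Omega> T (edge_end E)"
proof -
  have "{edge_start E, edge_end E} \<in> mesh_edges" "{edge_end E, edge_start E} \<in> mesh_edges"
    using assms interior_edge_endpoints(2)[OF assms] by (simp_all add: insert_commute)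
  moreover have "edge_start E \<in> \<Union>T" "edge_end E \<in> \<Union>T"
    using edge_element_mem[OF assms] by blast+
  ultimately show "edge_end E \<in> neighbours \<Omega> T (edge_start E)"
    "edge_start E \<in> neighbours \<Omega> T (edge_end E)"
    using interior_edge_endpoints(1)[OF assms] unfolding neighbours_def mesh_nodes_def by auto
qed

lemma card_edges_at_node_le: "real (card {E\<in>mesh_edges. c \<in> E}) \<le> 48 * \<sigma>\<^sup>2"
proof -
  have "{E\<in>mesh_edges. c \<in> E} \<subseteq> (\<lambda>y. {c, y}) ` neighbours \<Omega> T c"
  proof
    fix E
    assume E: "E \<in> {E\<in>mesh_edges. c \<in> E}"
    then have "c = edge_start E \<or> c = edge_end E"
      using interior_edge_endpoints(2)[of E] by (metis (mono_tags, lifting) empty_iff insertE mem_Collect_eq)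
    then show "E \<in> (\<lambda>y. {c, y}) ` neighbours \<Omega> T c"
      using E interior_edge_neighbours[of E] interior_edge_endpoints(2)[of E]
      by (metis (mono_tags, lifting) image_eqI insert_commute mem_Collect_eq)
  qed
  then have "card {E\<in>mesh_edges. c \<in> E} \<le> card (neighbours \<Omega> T c)"
    using finite_neighbours by (meson card_image_le card_mono finite_imageI order_trans)
  then show ?thesis
    using card_neighbours_le[of c] by linarith
qed

lemma abs_edge_increment_le_nodal_variation:
  assumes "E \<in> mesh_edges"
  shows "\<bar>edge_increment w E\<bar> \<le> nodal_variation \<Omega> T w (edge_start E)"
    "\<bar>edge_increment w E\<bar> \<le> nodal_variation \<Omega> T w (edge_end E)"
proof -
  have "\<bar>w (edge_end E) - w (edge_start E)\<bar>
      \<le> (\<Sum>y\<in>neighbours \<Omega> T (edge_start E). \<bar>w (edge_start E) - w y\<bar>)"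
    using member_le_sum[OF interior_edge_neighbours(1)[OF assms] _ finite_neighbours,
        of "\<lambda>y. \<bar>w (edge_start E) - w y\<bar>"]
    by (simp add: abs_minus_commute)
  moreover have "\<bar>w (edge_end E) - w (edge_start E)\<bar>
      \<le> (\<Sum>y\<in>neighbours \<Omega> T (edge_end E). \<bar>w (edge_end E) - w y\<bar>)"
    using member_le_sum[OF interior_edge_neighbours(2)[OF assms] _ finite_neighbours,
        of "\<lambda>y. \<bar>w (edge_end E) - w y\<bar>"]
    by simp
  ultimately show "\<bar>edge_increment w E\<bar> \<le> nodal_variation \<Omega> T w (edge_start E)"
    "\<bar>edge_increment w E\<bar> \<le> nodal_variation \<Omega> T w (edge_end E)"
    unfolding nodal_variation_def edge_increment_def by simp_all
qed

lemma xi_node_diff_mult_increment_le: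
  assumes E: "E \<in> mesh_edges" and c: "c = edge_start E \<or> c = edge_end E"
  shows "\<bar>xi_node \<Omega> T v c - xi_node \<Omega> T w c\<bar> * \<bar>edge_increment w E\<bar>
    \<le> 2 * nodal_variation \<Omega> T (\<lambda>x. v x - w x) c"
proof -
  have "\<bar>edge_increment w E\<bar> \<le> nodal_variation \<Omega> T w c"
    using abs_edge_increment_le_nodal_variation[OF E] c by auto
  then have "\<bar>xi_node \<Omega> T v c - xi_node \<Omega> T w c\<bar> * \<bar>edge_increment w E\<bar>
      \<le> \<bar>xi_node \<Omega> T v c - xi_node \<Omega> T w c\<bar> * nodal_variation \<Omega> T w c"
    by (rule mult_left_mono) simp
  also have "\<dots> \<le> 2 * nodal_variation \<Omega> T (\<lambda>x. v x - w x) c"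
    by (rule xi_node_diff_le)
  finally show ?thesis .
qed

lemma alpha_increment_diff_le:
  fixes v w :: "pt \<Rightarrow> real"
  assumes p: "1 \<le> p" and E: "E \<in> mesh_edges"
  defines "u \<equiv> \<lambda>x. v x - w x"
  shows "\<bar>alpha_edge \<Omega> T p v E * edge_increment v E - alpha_edge \<Omega> T p w E * edge_increment w E\<bar>
    \<le> \<bar>edge_increment u E\<bar>
      + 2 * p * (nodal_variation \<Omega> T u (edge_start E) + nodal_variation \<Omega> T u (edge_end E))"
proof -
  define a b where "a = edge_start E" and "b = edge_end E"
  define da db where "da = \<bar>xi_node \<Omega> T v a - xi_node \<Omega> T w a\<bar>"
    and "db = \<bar>xi_node \<Omega> T v b - xi_node \<Omega> T w b\<bar>"
  have da: "da * \<bar>edge_increment w E\<bar> \<le> 2 * nodal_variation \<Omega> T u a"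
    unfolding da_def u_def a_def by (rule xi_node_diff_mult_increment_le[OF E]) simp
  have db: "db * \<bar>edge_increment w E\<bar> \<le> 2 * nodal_variation \<Omega> T u b"
    unfolding db_def u_def b_def by (rule xi_node_diff_mult_increment_le[OF E]) simp
  \<comment> \<open>split the product difference so that only the indicator difference meets the increment of \<open>w\<close>\<close>
  have "alpha_edge \<Omega> T p v E * edge_increment v E - alpha_edge \<Omega> T p w E * edge_increment w E
      = alpha_edge \<Omega> T p v E * edge_increment u E
        + (alpha_edge \<Omega> T p v E - alpha_edge \<Omega> T p w E) * edge_increment w E"
    unfolding u_def edge_increment_def by (simp add: algebra_simps)
  also have "\<bar>\<dots>\<bar> \<le> \<bar>edge_increment u E\<bar> + p * (da + db) * \<bar>edge_increment w E\<bar>"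
  proof (rule order_trans[OF abs_triangle_ineq add_mono])
    show "\<bar>alpha_edge \<Omega> T p v E * edge_increment u E\<bar> \<le> \<bar>edge_increment u E\<bar>"
      using alpha_edge_bounds[OF order_trans[OF zero_le_one p], of \<Omega> T v E]
      by (simp add: abs_mult mult_left_le_one_le)
    show "\<bar>(alpha_edge \<Omega> T p v E - alpha_edge \<Omega> T p w E) * edge_increment w E\<bar>
        \<le> p * (da + db) * \<bar>edge_increment w E\<bar>"
      unfolding abs_mult da_def db_def a_def b_def
      using alpha_edge_diff_le[OF p] by (intro mult_right_mono) auto
  qed
  also have "\<dots> \<le> \<bar>edge_increment u E\<bar> + p * (2 * nodal_variation \<Omega> T u a + 2 * nodal_variation \<Omega> T u b)"
    using da db p by (simp add: algebra_simps add_mono mult_left_mono)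
  finally show ?thesis
    unfolding a_def b_def by (simp add: algebra_simps)
qed

lemma card_edge_pairs_through_edge:
  assumes sel: "\<And>E. E \<in> mesh_edges \<Longrightarrow> e E \<in> E" and E': "E' \<in> mesh_edges"
  shows "real (card {x \<in> (SIGMA E:mesh_edges. neighbours \<Omega> T (e E)). {e (fst x), snd x} = E'})
    \<le> 4 * (48 * \<sigma>\<^sup>2)"
proof -
  define M where "M = 48 * \<sigma>\<^sup>2"
  define P where "P = (SIGMA E:mesh_edges. neighbours \<Omega> T (e E))"
  have E'_eq: "E' = {edge_start E', edge_end E'}"
    using interior_edge_endpoints(2)[OF E'] .
  have "card E' \<le> 2"
    by (subst E'_eq) (simp add: card_insert_le_m1)
  have "finite E'"
    by (subst E'_eq) simp
  have "{E\<in>mesh_edges. e E \<in> E'} \<subseteq> (\<Union>c\<in>E'. {E\<in>mesh_edges. c \<in> E})"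
    using sel by auto
  then have "real (card {E\<in>mesh_edges. e E \<in> E'}) \<le> real (card (\<Union>c\<in>E'. {E\<in>mesh_edges. c \<in> E}))"
    by (intro of_nat_mono card_mono) (use finite_mesh_edges \<open>finite E'\<close> in auto)
  also have "\<dots> \<le> (\<Sum>c\<in>E'. real (card {E\<in>mesh_edges. c \<in> E}))"
    using card_UN_le[OF \<open>finite E'\<close>] of_nat_mono by fastforce
  also have "\<dots> \<le> (\<Sum>c\<in>E'. M)"
    unfolding M_def by (intro sum_mono card_edges_at_node_le)
  also have "\<dots> \<le> 2 * M"
    using \<open>card E' \<le> 2\<close> unfolding M_def by (simp add: mult_right_mono)
  finally have edges: "real (card {E\<in>mesh_edges. e E \<in> E'}) \<le> 2 * M" .
  have "{x\<in>P. {e (fst x), snd x} = E'} \<subseteq> {E\<in>mesh_edges. e E \<in> E'} \<times> E'"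
    unfolding P_def by auto
  then have "card {x\<in>P. {e (fst x), snd x} = E'} \<le> card ({E\<in>mesh_edges. e E \<in> E'} \<times> E')"
    using finite_mesh_edges \<open>finite E'\<close> by (intro card_mono) auto
  also have "\<dots> = card {E\<in>mesh_edges. e E \<in> E'} * card E'"
    by (rule card_cartesian_product)
  finally have "real (card {x\<in>P. {e (fst x), snd x} = E'})
      \<le> real (card {E\<in>mesh_edges. e E \<in> E'}) * real (card E')"
    by (simp only: of_nat_mult[symmetric] of_nat_le_iff)
  also have "\<dots> \<le> (2 * M) * 2"
    using edges \<open>card E' \<le> 2\<close> unfolding M_def by (intro mult_mono) auto
  finally show ?thesis
    unfolding P_def M_def by simp
qed

lemma sum_mult_nodal_variation_eq:
  "(\<Sum>E\<in>mesh_edges. a E * nodal_variation \<Omega> T u (e E))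
    = (\<Sum>x\<in>(SIGMA E:mesh_edges. neighbours \<Omega> T (e E)). a (fst x) * \<bar>edge_increment u {e (fst x), snd x}\<bar>)"
proof -
  have "(\<Sum>E\<in>mesh_edges. a E * nodal_variation \<Omega> T u (e E))
      = (\<Sum>x\<in>(SIGMA E:mesh_edges. neighbours \<Omega> T (e E)). a (fst x) * \<bar>u (e (fst x)) - u (snd x)\<bar>)"
    unfolding nodal_variation_def sum_distrib_left
    using finite_mesh_edges finite_neighbours by (simp add: sum.Sigma case_prod_beta')
  also have "\<dots> = (\<Sum>x\<in>(SIGMA E:mesh_edges. neighbours \<Omega> T (e E)). a (fst x) * \<bar>edge_increment u {e (fst x), snd x}\<bar>)"
  proof (rule sum.cong[OF refl])
    fix x
    assume "x \<in> (SIGMA E:mesh_edges. neighbours \<Omega> T (e E))"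
    then have "{e (fst x), snd x} \<in> mesh_edges"
      unfolding neighbours_def by auto
    then show "a (fst x) * \<bar>u (e (fst x)) - u (snd x)\<bar> = a (fst x) * \<bar>edge_increment u {e (fst x), snd x}\<bar>"
      using abs_edge_increment[OF _ refl] by simp
  qed
  finally show ?thesis .
qed

lemma sum_abs_increment_nodal_variation_le:
  assumes sel: "\<And>E. E \<in> mesh_edges \<Longrightarrow> e E \<in> E"
  shows "(\<Sum>E\<in>mesh_edges. \<bar>edge_increment z E\<bar> * nodal_variation \<Omega> T u (e E))
    \<le> 2 * (48 * \<sigma>\<^sup>2) * L2_set (edge_increment z) mesh_edges * L2_set (edge_increment u) mesh_edges"
proof -
  define M where "M = 48 * \<sigma>\<^sup>2"
  define P where "P = (SIGMA E:mesh_edges. neighbours \<Omega> T (e E))"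
  define pair_edge where "pair_edge x = {e (fst x), snd x}" for x :: "pt set \<times> pt"
  have "finite P"
    unfolding P_def using finite_mesh_edges finite_neighbours by auto
  have pair_edge: "pair_edge x \<in> mesh_edges" if "x \<in> P" for x
    using that unfolding P_def pair_edge_def neighbours_def by auto
  \<comment> \<open>expand each nodal variation into its neighbouring edges and apply Cauchy-Schwarz over the pairs\<close>
  have "(\<Sum>E\<in>mesh_edges. \<bar>edge_increment z E\<bar> * nodal_variation \<Omega> T u (e E))
      = (\<Sum>x\<in>P. \<bar>edge_increment z (fst x)\<bar> * \<bar>edge_increment u (pair_edge x)\<bar>)"
    unfolding P_def pair_edge_def by (rule sum_mult_nodal_variation_eq)
  also have "\<dots> \<le> L2_set (\<lambda>x. edge_increment z (fst x)) P * L2_set (\<lambda>x. edge_increment u (pair_edge x)) P"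
    by (rule L2_set_mult_ineq)
  also have "\<dots> \<le> (sqrt M * L2_set (edge_increment z) mesh_edges)
      * (sqrt (4 * M) * L2_set (edge_increment u) mesh_edges)"
  proof (rule mult_mono)
    show "L2_set (\<lambda>x. edge_increment z (fst x)) P \<le> sqrt M * L2_set (edge_increment z) mesh_edges"
    proof (rule L2_set_comp_le_fibre_bound[OF \<open>finite P\<close> finite_mesh_edges])
      fix E
      assume "E \<in> mesh_edges"
      then have "{x\<in>P. fst x = E} = {E} \<times> neighbours \<Omega> T (e E)"
        unfolding P_def by auto
      then show "real (card {x\<in>P. fst x = E}) \<le> M"
        unfolding M_def using card_neighbours_le by (simp add: card_cartesian_product)
    qed (auto simp: P_def)
    show "L2_set (\<lambda>x. edge_increment u (pair_edge x)) P \<le> sqrt (4 * M) * L2_set (edge_increment u) mesh_edges"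
      using card_edge_pairs_through_edge[OF sel] pair_edge unfolding P_def pair_edge_def M_def
      by (intro L2_set_comp_le_fibre_bound[OF \<open>finite P\<close>[unfolded P_def] finite_mesh_edges]) auto
  qed (simp_all add: M_def)
  also have "\<dots> = (sqrt M * sqrt (4 * M)) * L2_set (edge_increment z) mesh_edges
      * L2_set (edge_increment u) mesh_edges"
    by (simp only: ac_simps)
  also have "sqrt M * sqrt (4 * M) = 2 * M"
    unfolding real_sqrt_mult real_sqrt_four using real_sqrt_mult_self[of M] by (simp add: M_def)
  finally show ?thesis
    unfolding M_def .
qed

lemma sum_abs_alpha_increment_diff_le:
  fixes v w z :: "pt \<Rightarrow> real"
  assumes p: "1 \<le> p"
  defines "u \<equiv> \<lambda>x. v x - w x"
  shows "(\<Sum>E\<in>mesh_edges. \<bar>alpha_edge \<Omega> T p v E * edge_increment v E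
        - alpha_edge \<Omega> T p w E * edge_increment w E\<bar> * \<bar>edge_increment z E\<bar>)
    \<le> (1 + 384 * p * \<sigma>\<^sup>2) * L2_set (edge_increment z) mesh_edges * L2_set (edge_increment u) mesh_edges"
proof -
  define Lz Lu where "Lz = L2_set (edge_increment z) mesh_edges" and "Lu = L2_set (edge_increment u) mesh_edges"
  have "(\<Sum>E\<in>mesh_edges. \<bar>alpha_edge \<Omega> T p v E * edge_increment v E
        - alpha_edge \<Omega> T p w E * edge_increment w E\<bar> * \<bar>edge_increment z E\<bar>)
      \<le> (\<Sum>E\<in>mesh_edges. \<bar>edge_increment z E\<bar> * \<bar>edge_increment u E\<bar>
        + 2 * p * (\<bar>edge_increment z E\<bar> * nodal_variation \<Omega> T u (edge_start E))
        + 2 * p * (\<bar>edge_increment z E\<bar> * nodal_variation \<Omega> T u (edge_end E)))"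
  proof (rule sum_mono)
    fix E
    assume "E \<in> mesh_edges"
    from mult_right_mono[OF alpha_increment_diff_le[OF p this] abs_ge_zero[of "edge_increment z E"]]
    show "\<bar>alpha_edge \<Omega> T p v E * edge_increment v E - alpha_edge \<Omega> T p w E * edge_increment w E\<bar>
        * \<bar>edge_increment z E\<bar>
      \<le> \<bar>edge_increment z E\<bar> * \<bar>edge_increment u E\<bar>
        + 2 * p * (\<bar>edge_increment z E\<bar> * nodal_variation \<Omega> T u (edge_start E))
        + 2 * p * (\<bar>edge_increment z E\<bar> * nodal_variation \<Omega> T u (edge_end E))"
      unfolding u_def by (simp add: algebra_simps)
  qed
  also have "\<dots> = (\<Sum>E\<in>mesh_edges. \<bar>edge_increment z E\<bar> * \<bar>edge_increment u E\<bar>)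
      + 2 * p * (\<Sum>E\<in>mesh_edges. \<bar>edge_increment z E\<bar> * nodal_variation \<Omega> T u (edge_start E))
      + 2 * p * (\<Sum>E\<in>mesh_edges. \<bar>edge_increment z E\<bar> * nodal_variation \<Omega> T u (edge_end E))"
    by (simp add: sum.distrib sum_distrib_left)
  also have "\<dots> \<le> Lz * Lu + 2 * p * (2 * (48 * \<sigma>\<^sup>2) * Lz * Lu) + 2 * p * (2 * (48 * \<sigma>\<^sup>2) * Lz * Lu)"
    unfolding Lz_def Lu_def using p interior_edge_endpoints(2)
    by (intro add_mono mult_left_mono L2_set_mult_ineq sum_abs_increment_nodal_variation_le) auto
  also have "\<dots> = (1 + 384 * p * \<sigma>\<^sup>2) * Lz * Lu"
    by (simp add: algebra_simps)
  finally show ?thesis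
    unfolding Lz_def Lu_def .
qed

lemma abs_d_h_diff_le:
  assumes "0 < \<gamma>" and v: "v \<in> P1_space T" and w: "w \<in> P1_space T" and z: "z \<in> P1_space T"
  shows "\<bar>d_h \<Omega> T p \<gamma> v v z - d_h \<Omega> T p \<gamma> w w z\<bar>
    \<le> \<gamma> * mesh_size T * (\<Sum>E\<in>mesh_edges. \<bar>alpha_edge \<Omega> T p v E * edge_increment v E
        - alpha_edge \<Omega> T p w E * edge_increment w E\<bar> * \<bar>edge_increment z E\<bar>)"
proof -
  define D where "D E = alpha_edge \<Omega> T p v E * edge_increment v E
    - alpha_edge \<Omega> T p w E * edge_increment w E" for E
  have "d_h \<Omega> T p \<gamma> v v z - d_h \<Omega> T p \<gamma> w w z
      = (\<Sum>E\<in>mesh_edges. \<gamma> * edge_length E * D E * edge_increment z E)"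
    unfolding d_h_P1_eq[OF v z] d_h_P1_eq[OF w z] D_def
    by (simp add: sum_subtractf[symmetric] algebra_simps)
  also have "\<bar>\<dots>\<bar> \<le> (\<Sum>E\<in>mesh_edges. \<gamma> * mesh_size T * (\<bar>D E\<bar> * \<bar>edge_increment z E\<bar>))"
  proof (rule order_trans[OF sum_abs sum_mono])
    fix E
    assume "E \<in> mesh_edges"
    then have "0 \<le> edge_length E" "edge_length E \<le> mesh_size T"
      using edge_length_pos edge_length_le_mesh_size by (simp_all add: less_imp_le)
    then have "edge_length E * (\<bar>D E\<bar> * \<bar>edge_increment z E\<bar>) \<le> mesh_size T * (\<bar>D E\<bar> * \<bar>edge_increment z E\<bar>)"
      by (intro mult_right_mono) simp_all
    then show "\<bar>\<gamma> * edge_length E * D E * edge_increment z E\<bar>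
        \<le> \<gamma> * mesh_size T * (\<bar>D E\<bar> * \<bar>edge_increment z E\<bar>)"
      using \<open>0 < \<gamma>\<close> \<open>0 \<le> edge_length E\<close> by (simp add: abs_mult mult.assoc)
  qed
  finally show ?thesis
    unfolding D_def sum_distrib_left .
qed

lemma d_h_lipschitz:
  assumes p: "1 \<le> p" and "0 < \<gamma>"
    and v: "v \<in> P1_space T" and w: "w \<in> P1_space T" and z: "z \<in> P1_space T"
  shows "\<bar>d_h \<Omega> T p \<gamma> v v z - d_h \<Omega> T p \<gamma> w w z\<bar>
    \<le> (1 + 384 * p * \<sigma>\<^sup>2) * (128 * \<sigma>\<^sup>2 / unit_disc_measure) * \<gamma> * mesh_size T
      * H1_seminorm \<Omega> (\<lambda>x. v x - w x) * H1_seminorm \<Omega> z"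
proof -
  define u A where "u = (\<lambda>x. v x - w x)" and "A = 128 * \<sigma>\<^sup>2 / unit_disc_measure"
  have "0 \<le> A"
    unfolding A_def using unit_disc_measure_pos by simp
  have "0 \<le> \<gamma> * mesh_size T"
    using \<open>0 < \<gamma>\<close> mesh_size_pos by simp
  have "\<bar>d_h \<Omega> T p \<gamma> v v z - d_h \<Omega> T p \<gamma> w w z\<bar>
      \<le> \<gamma> * mesh_size T * ((1 + 384 * p * \<sigma>\<^sup>2) * L2_set (edge_increment z) mesh_edges
        * L2_set (edge_increment u) mesh_edges)"
    using abs_d_h_diff_le[OF \<open>0 < \<gamma>\<close> v w z] sum_abs_alpha_increment_diff_le[OF p, of v w z]
      \<open>0 \<le> \<gamma> * mesh_size T\<close> unfolding u_def by (meson mult_left_mono order_trans)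
  also have "\<dots> \<le> \<gamma> * mesh_size T * ((1 + 384 * p * \<sigma>\<^sup>2) * (sqrt A * H1_seminorm \<Omega> z)
      * (sqrt A * H1_seminorm \<Omega> u))"
    using L2_set_edge_increment_le[OF z, folded A_def]
      L2_set_edge_increment_le[OF P1_space_diff[OF v w], folded A_def u_def]
      \<open>0 \<le> \<gamma> * mesh_size T\<close> p \<open>0 \<le> A\<close>
    by (intro mult_left_mono mult_mono) (simp_all add: H1_seminorm_nonneg)
  also have "\<dots> = (1 + 384 * p * \<sigma>\<^sup>2) * A * \<gamma> * mesh_size T * H1_seminorm \<Omega> u * H1_seminorm \<Omega> z"
    using unit_disc_measure_pos unfolding A_def by (simp add: algebra_simps)
  finally show ?thesis
    unfolding u_def A_def .
qed

end

theorem lemma2p2: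
  fixes \<sigma> p :: real
  assumes "p \<ge> 1"
  shows "\<exists>C>0. \<forall>(\<Omega>::pt set) T \<gamma>\<^sub>0 v w z.
     open \<Omega> \<and> bounded \<Omega> \<and> connected \<Omega> \<and> lipschitz_boundary \<Omega> \<and>
     conforming_triangulation \<Omega> T \<and> shape_regular \<sigma> T \<and> \<gamma>\<^sub>0 > 0 \<and>
     v \<in> P1_space T \<and> w \<in> P1_space T \<and> z \<in> P1_space T \<longrightarrow>
     \<bar>d_h \<Omega> T p \<gamma>\<^sub>0 v v z - d_h \<Omega> T p \<gamma>\<^sub>0 w w z\<bar>
       \<le> C * \<gamma>\<^sub>0 * mesh_size T * H1_seminorm \<Omega> (\<lambda>x. v x - w x) * H1_seminorm \<Omega> z"
proof -
  define C where "C = (1 + 384 * p * \<sigma>\<^sup>2) * (128 * \<sigma>\<^sup>2 / unit_disc_measure)"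
  have "0 \<le> C"
    unfolding C_def using assms unit_disc_measure_pos by simp
  show ?thesis
  proof (intro exI[of _ "C + 1"] conjI allI impI)
    fix \<Omega> :: "pt set" and T :: "pt set set" and \<gamma> :: real and v w z :: "pt \<Rightarrow> real"
    assume H: "open \<Omega> \<and> bounded \<Omega> \<and> connected \<Omega> \<and> lipschitz_boundary \<Omega> \<and>
      conforming_triangulation \<Omega> T \<and> shape_regular \<sigma> T \<and> \<gamma> > 0 \<and>
      v \<in> P1_space T \<and> w \<in> P1_space T \<and> z \<in> P1_space T"
    then interpret shape_regular_mesh \<Omega> T \<sigma>
      by unfold_locales simp_all
    have "0 \<le> \<gamma> * mesh_size T * H1_seminorm \<Omega> (\<lambda>x. v x - w x) * H1_seminorm \<Omega> z"
      using H mesh_size_pos by (simp add: H1_seminorm_nonneg)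
    then have "C * (\<gamma> * mesh_size T * H1_seminorm \<Omega> (\<lambda>x. v x - w x) * H1_seminorm \<Omega> z)
        \<le> (C + 1) * (\<gamma> * mesh_size T * H1_seminorm \<Omega> (\<lambda>x. v x - w x) * H1_seminorm \<Omega> z)"
      by (intro mult_right_mono) simp_all
    with d_h_lipschitz[of p \<gamma> v w z] assms H
    show "\<bar>d_h \<Omega> T p \<gamma> v v z - d_h \<Omega> T p \<gamma> w w z\<bar>
        \<le> (C + 1) * \<gamma> * mesh_size T * H1_seminorm \<Omega> (\<lambda>x. v x - w x) * H1_seminorm \<Omega> z"
      unfolding C_def by (simp add: mult.assoc)
  qed (use \<open>0 \<le> C\<close> in simp)
qed

end
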